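(* Let $d\ge 2$ and let $\Delta$ be a $(d-1)$-dimensional balanced simplicial complex, with coloring $\kappa:V(\Delta)\to[d]$, that is doubly Buchsbaum over $\mathbf{k}$. Then for every nonempty proper subset $S\subsetneq[d]$, the rank-selected subcomplex $\Delta_S$ is Buchsbaum* over $\mathbf{k}$. In particular, every rank-selected subcomplex $\Delta_S$ ($\emptyset\ne S\subsetneq[d]$) of a balanced Buchsbaum* complex is Buchsbaum*.
   Context: All simplicial complexes are finite; $\mathbf{k}$ is a fixed field and all homology is reduced simplicial homology with coefficients in $\mathbf{k}$. For a face $\tau$ of $\Delta$: $\mathrm{lk}_\Delta(\tau)=\{\sigma\in\Delta:\sigma\cap\tau=\emptyset,\ \sigma\cup\tau\in\Delta\}$ and $\mathrm{cost}_\Delta(\tau)=\{\sigma\in\Delta:\sigma\not\supseteq\tau\}$. For $A\subseteq V(\Delta)$, $\Delta-A$ is the restriction (induced subcomplex) of $\Delta$ to $V(\Delta)\setminus A$; $\Delta-v=\Delta-\{v\}$. A $(d-1)$-dimensional complex $\Delta$ is Cohen–Macaulay (CM) over $\mathbf{k}$ if for every face $F$ (including $\emptyset$), $\widetilde H_i(\mathrm{lk}_\Delta F)=0$ for all $i<d-1-|F|$; it is Buchsbaum over $\mathbf{k}$ if it is pure and this holds for every nonempty face $F$. $\Delta$ is doubly Buchsbaum if it is Buchsbaum and $\Delta-v$ is Buchsbaum of dimension $d-1$ for every vertex $v$. A $(d-1)$-dimensional Buchsbaum complex $\Delta$ is Buchsbaum* over $\mathbf{k}$ if for every point $p$ of the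 geometric realization $|\Delta|$, the canonical map $\widetilde H_{d-1}(|\Delta|)\to \widetilde H_{d-1}(|\Delta|,|\Delta|-p)$ is surjective (equivalently, for every face $\tau$, the map $\widetilde H_{d-1}(\Delta)\to\widetilde H_{d-1}(\Delta,\mathrm{cost}_\Delta\tau)$ induced by inclusion is surjective). $\Delta$ is balanced if there is a coloring $\kappa:V(\Delta)\to[d]$ with $\kappa(u)\neq\kappa(v)$ for every edge $\{u,v\}$; for $S\subseteq[d]$, the rank-selected subcomplex is $\Delta_S=\{\tau\in\Delta:\kappa(\tau)\subseteq S\}$. (It is known that Buchsbaum* complexes are doubly Buchsbaum.) *)

theory Defs
  imports Main
begin

text \<open>Finite abstract simplicial complexes on a linearly ordered vertex type
 (the order only fixes orientations of simplices). Faces are finite vertex sets;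
 the complex is nonempty, so it contains the empty face.\<close>

definition simplicial_complex :: "'a set set \<Rightarrow> bool" where
  "simplicial_complex \<Delta> \<longleftrightarrow> finite \<Delta> \<and> \<Delta> \<noteq> {} \<and> (\<forall>\<sigma>\<in>\<Delta>. finite \<sigma>)
     \<and> (\<forall>\<sigma>\<in>\<Delta>. \<forall>\<tau>. \<tau> \<subseteq> \<sigma> \<longrightarrow> \<tau> \<in> \<Delta>)"

definition vertices :: "'a set set \<Rightarrow> 'a set" where
  "vertices \<Delta> = \<Union>\<Delta>"

definition link :: "'a set set \<Rightarrow> 'a set \<Rightarrow> 'a set set" where
  "link \<Delta> \<tau> = {\<sigma>\<in>\<Delta>. \<sigma> \<inter> \<tau> = {} \<and> \<sigma> \<union> \<tau> \<in> \<Delta>}"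

definition cost :: "'a set set \<Rightarrow> 'a set \<Rightarrow> 'a set set" where
  "cost \<Delta> \<tau> = {\<sigma>\<in>\<Delta>. \<not> \<tau> \<subseteq> \<sigma>}"

definition delete :: "'a set set \<Rightarrow> 'a set \<Rightarrow> 'a set set" where
  "delete \<Delta> A = {\<sigma>\<in>\<Delta>. \<sigma> \<inter> A = {}}"

text \<open>Simplicial chains: a chain with index m lives in homological degree m-1
 (so m = 0 is the degree -1 of reduced homology, spanned by the empty face).\<close>
definition chains :: "'a set set \<Rightarrow> nat \<Rightarrow> ('a set \<Rightarrow> 'k::zero) set" where
  "chains \<Delta> m = {c. \<forall>\<sigma>. c \<sigma> \<noteq> 0 \<longrightarrow> \<sigma> \<in> \<Delta> \<and> card \<sigma> = m}"

definition bd :: "'a::linorder set set \<Rightarrow> ('a set \<Rightarrow> 'k::comm_ring_1) \<Rightarrow> 'a set \<Rightarrow> 'k" where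
  "bd \<Delta> c \<sigma> = (\<Sum>v\<in>{v. v \<notin> \<sigma> \<and> insert v \<sigma> \<in> \<Delta>}.
       (- 1) ^ card {u\<in>\<sigma>. u < v} * c (insert v \<sigma>))"

text \<open>Vanishing of reduced homology over the field 'k in degree m-1.\<close>
definition hvanish :: "'k::field itself \<Rightarrow> 'a::linorder set set \<Rightarrow> nat \<Rightarrow> bool" where
  "hvanish K \<Delta> m \<longleftrightarrow>
     (\<forall>c::'a set \<Rightarrow> 'k. c \<in> chains \<Delta> m \<and> bd \<Delta> c = (\<lambda>_. 0)
        \<longrightarrow> (\<exists>b \<in> chains \<Delta> (Suc m). bd \<Delta> b = c))"

text \<open>Surjectivity of the map H_(m-1)(Delta) -> H_(m-1)(Delta, Gamma) induced by inclusion
 (Gamma a subcomplex): every relative cycle is homologous (rel Gamma) to an absolute cycle.\<close>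
definition rel_surj :: "'k::field itself \<Rightarrow> 'a::linorder set set \<Rightarrow> 'a set set \<Rightarrow> nat \<Rightarrow> bool" where
  "rel_surj K \<Delta> \<Gamma> m \<longleftrightarrow>
     (\<forall>c::'a set \<Rightarrow> 'k. c \<in> chains \<Delta> m \<and> bd \<Delta> c \<in> chains \<Gamma> (m - 1)
        \<longrightarrow> (\<exists>z \<in> chains \<Delta> m. bd \<Delta> z = (\<lambda>_. 0) \<and>
               (\<exists>b \<in> chains \<Delta> (Suc m). (\<lambda>\<sigma>. c \<sigma> - z \<sigma> - bd \<Delta> b \<sigma>) \<in> chains \<Gamma> m)))"

text \<open>Delta has dimension n-1.\<close>
definition has_dim :: "'a set set \<Rightarrow> nat \<Rightarrow> bool" where
  "has_dim \<Delta> n \<longleftrightarrow> (\<forall>\<sigma>\<in>\<Delta>. card \<sigma> \<le> n) \<and> (\<exists>\<sigma>\<in>\<Delta>. card \<sigma> = n)"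

definition pure :: "'a set set \<Rightarrow> bool" where
  "pure \<Delta> \<longleftrightarrow> (\<forall>\<sigma>\<in>\<Delta>. \<forall>\<tau>\<in>\<Delta>. (\<forall>\<rho>\<in>\<Delta>. \<sigma> \<subseteq> \<rho> \<longrightarrow> \<rho> = \<sigma>) \<longrightarrow> card \<tau> \<le> card \<sigma>)"

definition buchsbaum :: "'k::field itself \<Rightarrow> 'a::linorder set set \<Rightarrow> nat \<Rightarrow> bool" where
  "buchsbaum K \<Delta> n \<longleftrightarrow> simplicial_complex \<Delta> \<and> has_dim \<Delta> n \<and> pure \<Delta> \<and>
     (\<forall>F\<in>\<Delta>. F \<noteq> {} \<longrightarrow> (\<forall>m. m + card F < n \<longrightarrow> hvanish K (link \<Delta> F) m))"

definition doubly_buchsbaum :: "'k::field itself \<Rightarrow> 'a::linorder set set \<Rightarrow> nat \<Rightarrow> bool" where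
  "doubly_buchsbaum K \<Delta> n \<longleftrightarrow> buchsbaum K \<Delta> n \<and>
     (\<forall>v\<in>vertices \<Delta>. buchsbaum K (delete \<Delta> {v}) n)"

text \<open>Buchsbaum* of dimension n-1 (face version of the definition):
 H_(n-1)(Delta) -> H_(n-1)(Delta, cost tau) surjective for every face tau.\<close>
definition buchsbaum_star :: "'k::field itself \<Rightarrow> 'a::linorder set set \<Rightarrow> nat \<Rightarrow> bool" where
  "buchsbaum_star K \<Delta> n \<longleftrightarrow> buchsbaum K \<Delta> n \<and>
     (\<forall>\<tau>\<in>\<Delta>. rel_surj K \<Delta> (cost \<Delta> \<tau>) n)"

definition balanced :: "'a set set \<Rightarrow> nat \<Rightarrow> ('a \<Rightarrow> nat) \<Rightarrow> bool" where
  "balanced \<Delta> d \<kappa> \<longleftrightarrow> (\<forall>v\<in>vertices \<Delta>. \<kappa> v \<in> {1..d}) \<and>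
     (\<forall>u v. {u, v} \<in> \<Delta> \<and> u \<noteq> v \<longrightarrow> \<kappa> u \<noteq> \<kappa> v)"

definition rank_selected :: "'a set set \<Rightarrow> ('a \<Rightarrow> nat) \<Rightarrow> nat set \<Rightarrow> 'a set set" where
  "rank_selected \<Delta> \<kappa> S = {\<tau>\<in>\<Delta>. \<kappa> ` \<tau> \<subseteq> S}"

end

theory Submission
  imports Defs
begin

text \<open>
  At a vertex \<open>v\<close> we use the cone
  \<open>v * \<gamma>\<close> and its inverse, the contraction of a chain at \<open>v\<close>; the identities
  \<open>\<partial>(v * \<gamma>) = \<gamma> - v * \<partial>\<gamma>\<close> and \<open>\<partial>(contract v c) = - contract v (\<partial>c)\<close> drive every construction.
\<close>

definition ins_sign :: "'a::linorder \<Rightarrow> 'a set \<Rightarrow> 'k::comm_ring_1" where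
  "ins_sign v \<sigma> = (- 1) ^ card {u\<in>\<sigma>. u < v}"

definition bdry :: "'a::linorder set \<Rightarrow> ('a set \<Rightarrow> 'k::comm_ring_1) \<Rightarrow> 'a set \<Rightarrow> 'k" where
  "bdry V c \<sigma> = (\<Sum>v\<in>V - \<sigma>. ins_sign v \<sigma> * c (insert v \<sigma>))"

definition cone :: "'a::linorder \<Rightarrow> ('a set \<Rightarrow> 'k::comm_ring_1) \<Rightarrow> 'a set \<Rightarrow> 'k" where
  "cone v \<gamma> \<rho> = (if v \<in> \<rho> then ins_sign v (\<rho> - {v}) * \<gamma> (\<rho> - {v}) else 0)"

definition contract :: "'a::linorder \<Rightarrow> ('a set \<Rightarrow> 'k::comm_ring_1) \<Rightarrow> 'a set \<Rightarrow> 'k" where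
  "contract v c \<sigma> = (if v \<in> \<sigma> then 0 else ins_sign v \<sigma> * c (insert v \<sigma>))"

definition finite_supp :: "('a set \<Rightarrow> 'k::zero) \<Rightarrow> bool" where
  "finite_supp c \<longleftrightarrow> (\<forall>\<sigma>. c \<sigma> \<noteq> 0 \<longrightarrow> finite \<sigma>)"

text \<open>Sign bookkeeping: a sign squares to one, and inserting two vertices in either order
  gives opposite signs; the latter makes coning anticommute with the boundary.\<close>

lemma ins_sign_square: "ins_sign v \<sigma> * ins_sign v \<sigma> = (1::'k::comm_ring_1)"
  unfolding ins_sign_def by (simp flip: power_add power_mult_distrib)

lemma card_less_insert:
  assumes "finite \<sigma>" "v \<notin> \<sigma>"
  shows "card {u\<in>insert v \<sigma>. u < w} =
           (if v < w then Suc (card {u\<in>\<sigma>. u < w}) else card {u\<in>\<sigma>. u < w})"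
proof (cases "v < w")
  case True
  hence "{u\<in>insert v \<sigma>. u < w} = insert v {u\<in>\<sigma>. u < w}" by auto
  thus ?thesis using True assms by simp
next
  case False
  hence "{u\<in>insert v \<sigma>. u < w} = {u\<in>\<sigma>. u < w}" by auto
  thus ?thesis using False by simp
qed

lemma ins_sign_swap:
  assumes "finite \<sigma>" "v \<notin> \<sigma>" "w \<notin> \<sigma>" "v \<noteq> w"
  shows "ins_sign w (insert v \<sigma>) * ins_sign v (insert w \<sigma>)
           = - (ins_sign v \<sigma> * (ins_sign w \<sigma> :: 'k::comm_ring_1))"
  using card_less_insert[OF assms(1,2), of w] card_less_insert[OF assms(1,3), of v] assms(4)
  unfolding ins_sign_def by (cases "v < w") (auto simp: not_less_iff_gr_or_eq)

lemma bd_eq_bdry: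
  assumes fin: "finite V" and sub: "\<Union>\<Lambda> \<subseteq> V" and c: "c \<in> chains \<Lambda> m"
  shows "bd \<Lambda> c = bdry V c"
proof
  fix \<sigma>
  have "{v. v \<notin> \<sigma> \<and> insert v \<sigma> \<in> \<Lambda>} \<subseteq> V - \<sigma>" using sub by blast
  moreover have "ins_sign v \<sigma> * c (insert v \<sigma>) = 0"
    if "v \<in> V - \<sigma> - {v. v \<notin> \<sigma> \<and> insert v \<sigma> \<in> \<Lambda>}" for v
  proof -
    have "c (insert v \<sigma>) = 0" using that c unfolding chains_def by auto
    thus ?thesis by simp
  qed
  ultimately show "bd \<Lambda> c \<sigma> = bdry V c \<sigma>"
    unfolding bd_def bdry_def ins_sign_def[symmetric] using fin by (intro sum.mono_neutral_left) auto
qed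

lemma bdry_indep:
  assumes "finite V1" "finite V2" "\<Union>\<Gamma> \<subseteq> V1" "\<Union>\<Gamma> \<subseteq> V2" "c \<in> chains \<Gamma> m"
  shows "bdry V1 c = bdry V2 c"
  using bd_eq_bdry[OF assms(1,3,5)] bd_eq_bdry[OF assms(2,4,5)] by simp

lemma bdry_add: "bdry V (\<lambda>\<rho>. a \<rho> + b \<rho>) \<sigma> = bdry V a \<sigma> + bdry V b \<sigma>"
  unfolding bdry_def by (simp add: sum.distrib distrib_left)

lemma bdry_diff: "bdry V (\<lambda>\<rho>. a \<rho> - b \<rho>) \<sigma> = bdry V a \<sigma> - bdry V b \<sigma>"
  unfolding bdry_def by (simp add: sum_subtractf right_diff_distrib)

lemma bdry_sum: "bdry V (\<lambda>\<rho>. \<Sum>i\<in>I. f i \<rho>) \<sigma> = (\<Sum>i\<in>I. bdry V (f i) \<sigma>)"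
  unfolding bdry_def by (simp add: sum_distrib_left sum.swap[of _ I])

lemma bdry_vanish: "(\<And>\<rho>. v \<in> \<rho> \<Longrightarrow> c \<rho> = 0) \<Longrightarrow> v \<in> \<sigma> \<Longrightarrow> bdry V c \<sigma> = 0"
  unfolding bdry_def by (intro sum.neutral) auto

lemma cone_sum: "cone v (\<lambda>\<sigma>. \<Sum>i\<in>I. f i \<sigma>) \<rho> = (\<Sum>i\<in>I. cone v (f i) \<rho>)"
  unfolding cone_def by (simp add: sum_distrib_left)

lemma cone_contract: "cone v (contract v c) \<rho> = (if v \<in> \<rho> then c \<rho> else (0::'k::comm_ring_1))"
proof (cases "v \<in> \<rho>")
  case True
  hence "insert v (\<rho> - {v}) = \<rho>" by blast
  thus ?thesis using True unfolding cone_def contract_def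
    by (simp add: mult.assoc[symmetric] ins_sign_square)
qed (simp add: cone_def)

lemma cone_insert: "v \<notin> \<sigma> \<Longrightarrow> cone v \<gamma> (insert v \<sigma>) = ins_sign v \<sigma> * \<gamma> \<sigma>"
  unfolding cone_def by (simp add: insert_Diff_if)

lemma contract_vanish: "v \<in> \<sigma> \<Longrightarrow> contract v c \<sigma> = 0"
  by (simp add: contract_def)

lemma finite_supp_contract: "finite_supp c \<Longrightarrow> finite_supp (contract v c)"
  unfolding finite_supp_def contract_def by (auto split: if_splits) (metis finite_insert mult_zero_right)

lemma bdry_cone_outside:
  assumes fin: "finite V" and vV: "v \<in> V" and v\<rho>: "v \<notin> \<rho>"
  shows "bdry V (cone v \<gamma>) \<rho> = (\<gamma> \<rho> :: 'k::comm_ring_1)"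
proof -
  have "bdry V (cone v \<gamma>) \<rho> = ins_sign v \<rho> * cone v \<gamma> (insert v \<rho>)
       + (\<Sum>w\<in>(V - \<rho>) - {v}. ins_sign w \<rho> * cone v \<gamma> (insert w \<rho>))"
    unfolding bdry_def using vV v\<rho> fin by (subst sum.remove[of _ v]) auto
  also have "(\<Sum>w\<in>(V - \<rho>) - {v}. ins_sign w \<rho> * cone v \<gamma> (insert w \<rho>)) = 0"
    using v\<rho> by (intro sum.neutral) (auto simp: cone_def)
  finally show ?thesis
    using v\<rho> by (simp add: cone_insert mult.assoc[symmetric] ins_sign_square)
qed

lemma bdry_cone_inside:
  fixes \<gamma> :: "'a::linorder set \<Rightarrow> 'k::comm_ring_1"
  assumes fin: "finite V" and vV: "v \<in> V" and gf: "finite_supp \<gamma>"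
    and gv: "\<And>\<sigma>. v \<in> \<sigma> \<Longrightarrow> \<gamma> \<sigma> = 0" and v0: "v \<notin> \<rho>"
  shows "bdry V (cone v \<gamma>) (insert v \<rho>) = - (ins_sign v \<rho> * bdry V \<gamma> \<rho>)"
proof -
  have summand: "ins_sign w (insert v \<rho>) * cone v \<gamma> (insert w (insert v \<rho>))
      = - (ins_sign v \<rho> * (ins_sign w \<rho> * \<gamma> (insert w \<rho>)))"
    if w: "w \<in> V - insert v \<rho>" for w
  proof (cases "\<gamma> (insert w \<rho>) = 0")
    case True
    moreover have "v \<notin> insert w \<rho>" using w v0 by auto
    ultimately show ?thesis by (simp add: insert_commute cone_insert)
  next
    case False
    hence "finite \<rho>" using gf unfolding finite_supp_def by auto
    hence swap: "ins_sign w (insert v \<rho>) * ins_sign v (insert w \<rho>)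
        = - (ins_sign v \<rho> * (ins_sign w \<rho> :: 'k))"
      using w v0 by (intro ins_sign_swap) auto
    have cone_eq: "cone v \<gamma> (insert v (insert w \<rho>)) = ins_sign v (insert w \<rho>) * \<gamma> (insert w \<rho>)"
      by (rule cone_insert) (use w v0 in auto)
    have "ins_sign w (insert v \<rho>) * cone v \<gamma> (insert w (insert v \<rho>))
        = (ins_sign w (insert v \<rho>) * ins_sign v (insert w \<rho>)) * \<gamma> (insert w \<rho>)"
      unfolding insert_commute[of w v] cone_eq by (simp only: mult.assoc)
    also have "\<dots> = - (ins_sign v \<rho> * (ins_sign w \<rho> * \<gamma> (insert w \<rho>)))"
      unfolding swap by simp
    finally show ?thesis .
  qed
  have rest: "(\<Sum>w\<in>V - insert v \<rho>. ins_sign w \<rho> * \<gamma> (insert w \<rho>)) = bdry V \<gamma> \<rho>"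
  proof -
    have split: "V - \<rho> = insert v (V - insert v \<rho>)" and nv: "v \<notin> V - insert v \<rho>"
      using vV v0 by auto
    have "bdry V \<gamma> \<rho> = ins_sign v \<rho> * \<gamma> (insert v \<rho>)
        + (\<Sum>w\<in>V - insert v \<rho>. ins_sign w \<rho> * \<gamma> (insert w \<rho>))"
      unfolding bdry_def split using fin nv by (intro sum.insert) auto
    thus ?thesis using gv[of "insert v \<rho>"] by simp
  qed
  have "bdry V (cone v \<gamma>) (insert v \<rho>)
      = (\<Sum>w\<in>V - insert v \<rho>. - (ins_sign v \<rho> * (ins_sign w \<rho> * \<gamma> (insert w \<rho>))))"
    unfolding bdry_def by (rule sum.cong[OF refl summand])
  also have "\<dots> = - (ins_sign v \<rho> * (\<Sum>w\<in>V - insert v \<rho>. ins_sign w \<rho> * \<gamma> (insert w \<rho>)))"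
    by (simp add: sum_negf sum_distrib_left)
  finally show ?thesis unfolding rest .
qed

lemma bdry_cone:
  fixes \<gamma> :: "'a::linorder set \<Rightarrow> 'k::comm_ring_1"
  assumes fin: "finite V" and vV: "v \<in> V" and gf: "finite_supp \<gamma>"
    and gv: "\<And>\<sigma>. v \<in> \<sigma> \<Longrightarrow> \<gamma> \<sigma> = 0"
  shows "bdry V (cone v \<gamma>) \<rho> = \<gamma> \<rho> - cone v (bdry V \<gamma>) \<rho>"
proof (cases "v \<in> \<rho>")
  case True
  then obtain \<rho>0 where r: "\<rho> = insert v \<rho>0" "v \<notin> \<rho>0" by (metis Set.set_insert)
  show ?thesis using bdry_cone_inside[OF fin vV gf gv r(2)] gv[OF True] r by (simp add: cone_insert)
qed (simp add: bdry_cone_outside[OF fin vV] cone_def)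

text \<open>Contraction at \<open>v\<close> anticommutes with the boundary.
  Write \<open>c\<close> as the cone over its contraction plus a part avoiding \<open>v\<close>.\<close>

lemma bdry_contract:
  fixes c :: "'a::linorder set \<Rightarrow> 'k::comm_ring_1"
  assumes fin: "finite V" and vV: "v \<in> V" and cf: "finite_supp c"
  shows "bdry V (contract v c) \<sigma> = - contract v (bdry V c) \<sigma>"
proof (cases "v \<in> \<sigma>")
  case True
  thus ?thesis using bdry_vanish[of v "contract v c"] by (simp add: contract_vanish)
next
  case False
  define \<gamma> where "\<gamma> = contract v c"
  define c' where "c' = (\<lambda>\<rho>. if v \<in> \<rho> then 0 else c \<rho>)"
  have "c = (\<lambda>\<rho>. cone v \<gamma> \<rho> + c' \<rho>)"
    unfolding \<gamma>_def c'_def cone_contract by auto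
  hence "bdry V c (insert v \<sigma>) = bdry V (\<lambda>\<rho>. cone v \<gamma> \<rho> + c' \<rho>) (insert v \<sigma>)"
    by (rule arg_cong)
  also have "\<dots> = bdry V (cone v \<gamma>) (insert v \<sigma>) + bdry V c' (insert v \<sigma>)"
    by (rule bdry_add)
  also have "bdry V c' (insert v \<sigma>) = 0" by (rule bdry_vanish) (auto simp: c'_def)
  also have "bdry V (cone v \<gamma>) (insert v \<sigma>) = - (ins_sign v \<sigma> * bdry V \<gamma> \<sigma>)"
    unfolding \<gamma>_def
    by (rule bdry_cone_inside[OF fin vV finite_supp_contract[OF cf] contract_vanish False])
  finally have "contract v (bdry V c) \<sigma> = ins_sign v \<sigma> * - (ins_sign v \<sigma> * bdry V \<gamma> \<sigma>)"
    using False by (simp add: contract_def)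
  thus ?thesis unfolding \<gamma>_def by (simp add: mult.assoc[symmetric] ins_sign_square)
qed

lemma bdry_cone_cycle:
  fixes \<gamma> :: "'a::linorder set \<Rightarrow> 'k::comm_ring_1"
  assumes "finite V" "v \<in> V" "finite_supp \<gamma>" "\<And>\<rho>. v \<in> \<rho> \<Longrightarrow> \<gamma> \<rho> = 0"
    and cyc: "\<And>\<rho>. bdry V \<gamma> \<rho> = 0"
  shows "bdry V (cone v \<gamma>) \<sigma> = \<gamma> \<sigma>"
  using bdry_cone[OF assms(1-4)] cyc by (simp add: cone_def)

lemma contract_cycle:
  fixes b :: "'a::linorder set \<Rightarrow> 'k::comm_ring_1"
  assumes "finite V" "v \<in> V" "finite_supp b"
    and bc: "\<And>\<rho>. bdry V b \<rho> = c \<rho>" and cv: "\<And>\<rho>. v \<in> \<rho> \<Longrightarrow> c \<rho> = 0"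
  shows "bdry V (contract v b) \<sigma> = 0"
  using bdry_contract[OF assms(1-3)] bc cv by (simp add: contract_def)

lemma star_decomposition:
  fixes b :: "'a::linorder set \<Rightarrow> 'k::comm_ring_1"
  assumes fW: "finite W"
    and one: "\<And>v w. b \<rho> \<noteq> 0 \<Longrightarrow> v \<in> \<rho> \<inter> W \<Longrightarrow> w \<in> \<rho> \<inter> W \<Longrightarrow> v = w"
  shows "b \<rho> = (if \<rho> \<inter> W = {} then b \<rho> else 0) + (\<Sum>v\<in>W. cone v (contract v b) \<rho>)"
proof -
  have s: "(\<Sum>v\<in>W. cone v (contract v b) \<rho>) = (\<Sum>v\<in>W. if v \<in> \<rho> then b \<rho> else 0)"
    by (simp add: cone_contract)
  show ?thesis
  proof (cases "b \<rho> = 0 \<or> \<rho> \<inter> W = {}")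
    case True thus ?thesis unfolding s by (auto intro!: sum.neutral)
  next
    case False
    then obtain x where x: "x \<in> \<rho> \<inter> W" and b: "b \<rho> \<noteq> 0" by auto
    have "(\<Sum>v\<in>W. if v \<in> \<rho> then b \<rho> else 0)
        = (if x \<in> \<rho> then b \<rho> else 0) + (\<Sum>v\<in>W - {x}. if v \<in> \<rho> then b \<rho> else 0)"
      using x fW by (subst sum.remove[of _ x]) auto
    also have "(\<Sum>v\<in>W - {x}. if v \<in> \<rho> then b \<rho> else 0) = 0"
      using one[OF b _ x] by (intro sum.neutral) auto
    finally show ?thesis using s x False by auto
  qed
qed

lemma bdry_star_decomposition:
  fixes b :: "'a::linorder set \<Rightarrow> 'k::comm_ring_1"
  assumes fV: "finite V" and WV: "W \<subseteq> V" and fb: "finite_supp b"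
    and one: "\<And>\<rho> v w. b \<rho> \<noteq> 0 \<Longrightarrow> v \<in> \<rho> \<inter> W \<Longrightarrow> w \<in> \<rho> \<inter> W \<Longrightarrow> v = w"
    and cyc: "\<And>v \<rho>. v \<in> W \<Longrightarrow> bdry V (contract v b) \<rho> = 0"
  shows "bdry V b \<sigma> = bdry V (\<lambda>\<rho>. if \<rho> \<inter> W = {} then b \<rho> else 0) \<sigma>
                       + (\<Sum>v\<in>W. contract v b \<sigma>)"
proof -
  have fW: "finite W" using fV WV finite_subset by blast
  have "b = (\<lambda>\<rho>. (if \<rho> \<inter> W = {} then b \<rho> else 0) + (\<Sum>v\<in>W. cone v (contract v b) \<rho>))"
    by (rule ext, rule star_decomposition[OF fW one])
  hence "bdry V b \<sigma>
      = bdry V (\<lambda>\<rho>. (if \<rho> \<inter> W = {} then b \<rho> else 0) + (\<Sum>v\<in>W. cone v (contract v b) \<rho>)) \<sigma>"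
    by (rule arg_cong)
  also have "\<dots> = bdry V (\<lambda>\<rho>. if \<rho> \<inter> W = {} then b \<rho> else 0) \<sigma>
                       + (\<Sum>v\<in>W. bdry V (cone v (contract v b)) \<sigma>)"
    by (simp only: bdry_add bdry_sum)
  also have "(\<Sum>v\<in>W. bdry V (cone v (contract v b)) \<sigma>) = (\<Sum>v\<in>W. contract v b \<sigma>)"
    using WV by (intro sum.cong refl bdry_cone_cycle[OF fV] finite_supp_contract[OF fb]
        contract_vanish cyc) auto
  finally show ?thesis .
qed

lemma sc_closed: "simplicial_complex \<Lambda> \<Longrightarrow> \<sigma> \<in> \<Lambda> \<Longrightarrow> \<tau> \<subseteq> \<sigma> \<Longrightarrow> \<tau> \<in> \<Lambda>"
  unfolding simplicial_complex_def by blast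

lemma sc_empty: "simplicial_complex \<Lambda> \<Longrightarrow> {} \<in> \<Lambda>"
  unfolding simplicial_complex_def by blast

lemma sc_finite_face: "simplicial_complex \<Lambda> \<Longrightarrow> \<sigma> \<in> \<Lambda> \<Longrightarrow> finite \<sigma>"
  unfolding simplicial_complex_def by blast

lemma sc_finite_vertices: "simplicial_complex \<Lambda> \<Longrightarrow> finite (\<Union>\<Lambda>)"
  unfolding simplicial_complex_def by blast

lemma sc_vertex_face: "simplicial_complex \<Lambda> \<Longrightarrow> v \<in> \<Union>\<Lambda> \<Longrightarrow> {v} \<in> \<Lambda>"
  by (meson UnionE empty_subsetI insert_subset sc_closed)

lemma sc_subcomplex:
  assumes "simplicial_complex \<Lambda>" "\<Gamma> \<subseteq> \<Lambda>" "{} \<in> \<Gamma>"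
    "\<And>\<sigma> \<tau>. \<sigma> \<in> \<Gamma> \<Longrightarrow> \<tau> \<subseteq> \<sigma> \<Longrightarrow> \<tau> \<in> \<Gamma>"
  shows "simplicial_complex \<Gamma>"
  using assms unfolding simplicial_complex_def by (meson empty_iff finite_subset subsetD)

lemma sc_link:
  assumes sc: "simplicial_complex \<Lambda>" and F: "F \<in> \<Lambda>"
  shows "simplicial_complex (link \<Lambda> F)"
proof (rule sc_subcomplex[OF sc])
  show "{} \<in> link \<Lambda> F" using sc_empty[OF sc] F unfolding link_def by auto
  show "\<tau> \<in> link \<Lambda> F" if "\<sigma> \<in> link \<Lambda> F" "\<tau> \<subseteq> \<sigma>" for \<sigma> \<tau>
    using that sc_closed[OF sc, of "\<sigma> \<union> F" "\<tau> \<union> F"] sc_closed[OF sc, of \<sigma> \<tau>]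
    unfolding link_def by auto
qed (auto simp: link_def)

lemma sc_rank_selected:
  assumes sc: "simplicial_complex \<Lambda>"
  shows "simplicial_complex (rank_selected \<Lambda> \<kappa> S)"
proof (rule sc_subcomplex[OF sc])
  show "{} \<in> rank_selected \<Lambda> \<kappa> S" using sc_empty[OF sc] by (simp add: rank_selected_def)
  show "\<tau> \<in> rank_selected \<Lambda> \<kappa> S" if "\<sigma> \<in> rank_selected \<Lambda> \<kappa> S" "\<tau> \<subseteq> \<sigma>" for \<sigma> \<tau>
    using that sc_closed[OF sc, of \<sigma> \<tau>] unfolding rank_selected_def by blast
qed (auto simp: rank_selected_def)

lemma sc_delete:
  assumes sc: "simplicial_complex \<Lambda>"
  shows "simplicial_complex (delete \<Lambda> A)"
proof (rule sc_subcomplex[OF sc])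
  show "{} \<in> delete \<Lambda> A" using sc_empty[OF sc] by (simp add: delete_def)
  show "\<tau> \<in> delete \<Lambda> A" if "\<sigma> \<in> delete \<Lambda> A" "\<tau> \<subseteq> \<sigma>" for \<sigma> \<tau>
    using that sc_closed[OF sc, of \<sigma> \<tau>] unfolding delete_def by blast
qed (auto simp: delete_def)

lemma link_empty: "link \<Lambda> {} = \<Lambda>"
  unfolding link_def by auto

lemma link_subset: "link \<Lambda> \<tau> \<subseteq> \<Lambda>"
  unfolding link_def by blast

lemma link_mem: "\<sigma> \<in> link \<Lambda> F \<Longrightarrow> F \<union> \<sigma> \<in> \<Lambda> \<and> F \<inter> \<sigma> = {} \<and> \<sigma> \<in> \<Lambda>"
  unfolding link_def by (auto simp: Un_commute)

lemma link_link:
  assumes "simplicial_complex \<Lambda>" "F \<inter> G = {}"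
  shows "link (link \<Lambda> F) G = link \<Lambda> (F \<union> G)"
  using assms unfolding link_def
  by (auto simp: Un_assoc Un_left_commute Un_commute intro: sc_closed)

lemma link_delete: "w \<notin> F \<Longrightarrow> link (delete \<Lambda> {w}) F = delete (link \<Lambda> F) {w}"
  unfolding link_def delete_def by auto

lemma link_rank_selected:
  "\<kappa> ` F \<subseteq> S \<Longrightarrow> link (rank_selected \<Lambda> \<kappa> S) F = rank_selected (link \<Lambda> F) \<kappa> S"
  unfolding link_def rank_selected_def by auto

lemma delete_rank_selected: "delete (rank_selected \<Lambda> \<kappa> S) A = rank_selected (delete \<Lambda> A) \<kappa> S"
  unfolding delete_def rank_selected_def by auto

lemma link_card_split:
  assumes sc: "simplicial_complex \<Lambda>" and F: "F \<in> \<Lambda>" and s: "\<sigma> \<in> link \<Lambda> F"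
  shows "link (link \<Lambda> F) \<sigma> = link \<Lambda> (F \<union> \<sigma>)" "F \<union> \<sigma> \<in> \<Lambda>"
    "card (F \<union> \<sigma>) = card F + card \<sigma>"
proof -
  have u: "F \<union> \<sigma> \<in> \<Lambda>" "F \<inter> \<sigma> = {}" "\<sigma> \<in> \<Lambda>" using link_mem[OF s] by auto
  show "link (link \<Lambda> F) \<sigma> = link \<Lambda> (F \<union> \<sigma>)" by (rule link_link[OF sc u(2)])
  show "F \<union> \<sigma> \<in> \<Lambda>" by (rule u(1))
  show "card (F \<union> \<sigma>) = card F + card \<sigma>"
    using u sc_finite_face[OF sc] F by (simp add: card_Un_disjoint)
qed

lemma chains_mono: "\<Gamma> \<subseteq> \<Gamma>' \<Longrightarrow> c \<in> chains \<Gamma> m \<Longrightarrow> c \<in> chains \<Gamma>' m"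
  unfolding chains_def by blast

lemma chains_finite_supp: "simplicial_complex \<Gamma> \<Longrightarrow> c \<in> chains \<Gamma> m \<Longrightarrow> finite_supp c"
  unfolding chains_def finite_supp_def using sc_finite_face by blast

lemma chains_add:
  fixes c d :: "'a set \<Rightarrow> 'k::comm_monoid_add"
  assumes "c \<in> chains \<Gamma> m" "d \<in> chains \<Gamma> m"
  shows "(\<lambda>\<rho>. c \<rho> + d \<rho>) \<in> chains \<Gamma> m"
  unfolding chains_def mem_Collect_eq
proof (intro allI impI)
  fix \<rho> assume "c \<rho> + d \<rho> \<noteq> 0"
  hence "c \<rho> \<noteq> 0 \<or> d \<rho> \<noteq> 0" by auto
  thus "\<rho> \<in> \<Gamma> \<and> card \<rho> = m" using assms unfolding chains_def by blast
qed

lemma chains_diff: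
  fixes c d :: "'a set \<Rightarrow> 'k::ab_group_add"
  assumes "c \<in> chains \<Gamma> m" "d \<in> chains \<Gamma> m"
  shows "(\<lambda>\<rho>. c \<rho> - d \<rho>) \<in> chains \<Gamma> m"
  unfolding chains_def mem_Collect_eq
proof (intro allI impI)
  fix \<rho> assume "c \<rho> - d \<rho> \<noteq> 0"
  hence "c \<rho> \<noteq> 0 \<or> d \<rho> \<noteq> 0" by auto
  thus "\<rho> \<in> \<Gamma> \<and> card \<rho> = m" using assms unfolding chains_def by blast
qed

lemma chains_sum:
  fixes f :: "'i \<Rightarrow> 'a set \<Rightarrow> 'k::comm_monoid_add"
  assumes "\<And>i. i \<in> I \<Longrightarrow> f i \<in> chains \<Gamma> m"
  shows "(\<lambda>\<rho>. \<Sum>i\<in>I. f i \<rho>) \<in> chains \<Gamma> m"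
  unfolding chains_def mem_Collect_eq
proof (intro allI impI)
  fix \<rho> assume "(\<Sum>i\<in>I. f i \<rho>) \<noteq> 0"
  then obtain i where "i \<in> I" "f i \<rho> \<noteq> 0" by (meson sum.neutral)
  thus "\<rho> \<in> \<Gamma> \<and> card \<rho> = m" using assms unfolding chains_def by blast
qed

lemma cone_chain:
  assumes sc: "simplicial_complex \<Gamma>" and z: "\<zeta> \<in> chains (link \<Gamma> {u}) m"
  shows "cone u \<zeta> \<in> chains \<Gamma> (Suc m)"
  unfolding chains_def mem_Collect_eq
proof (intro allI impI)
  fix \<rho> assume "cone u \<zeta> \<rho> \<noteq> 0"
  hence u: "u \<in> \<rho>" and "\<zeta> (\<rho> - {u}) \<noteq> 0" unfolding cone_def by (auto split: if_splits)
  hence l: "\<rho> - {u} \<in> link \<Gamma> {u}" "card (\<rho> - {u}) = m" using z unfolding chains_def by auto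
  have "(\<rho> - {u}) \<union> {u} = \<rho>" using u by auto
  hence r: "\<rho> \<in> \<Gamma>" using l(1) unfolding link_def by auto
  have "card \<rho> = Suc (card (\<rho> - {u}))"
    using sc_finite_face[OF sc r] u by (rule card_Suc_Diff1[symmetric])
  thus "\<rho> \<in> \<Gamma> \<and> card \<rho> = Suc m" using r l(2) by simp
qed

lemma contract_chain:
  assumes sc: "simplicial_complex \<Gamma>" and c: "c \<in> chains \<Gamma> (Suc m)"
  shows "contract u c \<in> chains (link \<Gamma> {u}) m"
  unfolding chains_def mem_Collect_eq
proof (intro allI impI)
  fix \<sigma> assume "contract u c \<sigma> \<noteq> 0"
  hence us: "u \<notin> \<sigma>" and "c (insert u \<sigma>) \<noteq> 0" unfolding contract_def by (auto split: if_splits)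
  hence m: "insert u \<sigma> \<in> \<Gamma>" "card (insert u \<sigma>) = Suc m" using c unfolding chains_def by auto
  have "\<sigma> \<in> link \<Gamma> {u}" using m us sc_closed[OF sc m(1)] unfolding link_def by auto
  moreover have "card \<sigma> = m" using m us sc_finite_face[OF sc m(1)] by simp
  ultimately show "\<sigma> \<in> link \<Gamma> {u} \<and> card \<sigma> = m" by simp
qed

lemma hvanish_bdry:
  fixes K :: "'k::field itself"
  assumes "finite V" "\<Union>\<Gamma> \<subseteq> V"
  shows "hvanish K \<Gamma> m \<longleftrightarrow> (\<forall>c::'a::linorder set \<Rightarrow> 'k. c \<in> chains \<Gamma> m \<and> (\<forall>\<sigma>. bdry V c \<sigma> = 0)
           \<longrightarrow> (\<exists>b\<in>chains \<Gamma> (Suc m). \<forall>\<sigma>. bdry V b \<sigma> = c \<sigma>))"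
proof -
  have e: "\<And>c l. c \<in> chains \<Gamma> l \<Longrightarrow> bd \<Gamma> c = bdry V c" by (rule bd_eq_bdry[OF assms])
  show ?thesis unfolding hvanish_def
  proof (intro iffI allI impI)
    fix c :: "'a set \<Rightarrow> 'k"
    assume H: "\<forall>c::'a set \<Rightarrow> 'k. c \<in> chains \<Gamma> m \<and> bd \<Gamma> c = (\<lambda>_. 0) \<longrightarrow> (\<exists>b\<in>chains \<Gamma> (Suc m). bd \<Gamma> b = c)"
      and c: "c \<in> chains \<Gamma> m \<and> (\<forall>\<sigma>. bdry V c \<sigma> = 0)"
    moreover have "bd \<Gamma> c = (\<lambda>_. 0)" using c e[of c m] by auto
    ultimately obtain b where "b \<in> chains \<Gamma> (Suc m)" "bd \<Gamma> b = c" using H[rule_format, of c] by blast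
    thus "\<exists>b\<in>chains \<Gamma> (Suc m). \<forall>\<sigma>. bdry V b \<sigma> = c \<sigma>" using e by metis
  next
    fix c :: "'a set \<Rightarrow> 'k"
    assume H: "\<forall>c::'a set \<Rightarrow> 'k. c \<in> chains \<Gamma> m \<and> (\<forall>\<sigma>. bdry V c \<sigma> = 0) \<longrightarrow> (\<exists>b\<in>chains \<Gamma> (Suc m). \<forall>\<sigma>. bdry V b \<sigma> = c \<sigma>)"
      and c: "c \<in> chains \<Gamma> m \<and> bd \<Gamma> c = (\<lambda>_. 0)"
    moreover have "\<forall>\<sigma>. bdry V c \<sigma> = 0" using c e[of c m] by metis
    ultimately obtain b where "b \<in> chains \<Gamma> (Suc m)" "\<forall>\<sigma>. bdry V b \<sigma> = c \<sigma>"
      using c H[rule_format, of c] by blast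
    thus "\<exists>b\<in>chains \<Gamma> (Suc m). bd \<Gamma> b = c" using e by (metis ext)
  qed
qed

definition proper_col :: "'a set set \<Rightarrow> nat set \<Rightarrow> ('a \<Rightarrow> nat) \<Rightarrow> bool" where
  "proper_col \<Lambda> C \<kappa> \<longleftrightarrow> (\<forall>\<sigma>\<in>\<Lambda>. \<kappa> ` \<sigma> \<subseteq> C \<and> inj_on \<kappa> \<sigma>)"

lemma proper_col_of_balanced:
  assumes sc: "simplicial_complex \<Delta>" and b: "balanced \<Delta> d \<kappa>"
  shows "proper_col \<Delta> {1..d} \<kappa>"
  unfolding proper_col_def
proof
  fix \<sigma> assume s: "\<sigma> \<in> \<Delta>"
  have "\<kappa> ` \<sigma> \<subseteq> {1..d}" using b s unfolding balanced_def vertices_def by blast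
  moreover have "inj_on \<kappa> \<sigma>"
  proof (rule inj_onI, rule ccontr)
    fix u v assume uv: "u \<in> \<sigma>" "v \<in> \<sigma>" "\<kappa> u = \<kappa> v" "u \<noteq> v"
    have "{u, v} \<in> \<Delta>" using sc_closed[OF sc s] uv by auto
    thus False using b uv unfolding balanced_def by blast
  qed
  ultimately show "\<kappa> ` \<sigma> \<subseteq> {1..d} \<and> inj_on \<kappa> \<sigma>" by simp
qed

lemma rank_selected_all: "proper_col \<Lambda> C \<kappa> \<Longrightarrow> rank_selected \<Lambda> \<kappa> C = \<Lambda>"
  unfolding proper_col_def rank_selected_def by auto

lemma proper_col_mono: "proper_col \<Lambda> C \<kappa> \<Longrightarrow> \<Gamma> \<subseteq> \<Lambda> \<Longrightarrow> proper_col \<Gamma> C \<kappa>"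
  unfolding proper_col_def by blast

lemma proper_col_link:
  assumes "proper_col \<Lambda> C \<kappa>"
  shows "proper_col (link \<Lambda> F) (C - \<kappa> ` F) \<kappa>"
  unfolding proper_col_def
proof
  fix \<sigma> assume "\<sigma> \<in> link \<Lambda> F"
  hence u: "\<sigma> \<union> F \<in> \<Lambda>" "\<sigma> \<inter> F = {}" by (auto simp: link_def)
  hence "inj_on \<kappa> (\<sigma> \<union> F)" "\<kappa> ` (\<sigma> \<union> F) \<subseteq> C" using assms by (auto simp: proper_col_def)
  thus "\<kappa> ` \<sigma> \<subseteq> C - \<kappa> ` F \<and> inj_on \<kappa> \<sigma>" using u(2) by (auto simp: inj_on_def)
qed

lemma proper_col_vertex_link:
  "proper_col \<Lambda> C \<kappa> \<Longrightarrow> proper_col (link \<Lambda> {v}) (C - {\<kappa> v}) \<kappa>"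
  using proper_col_link[of \<Lambda> C \<kappa> "{v}"] by simp

lemma proper_col_unique:
  "proper_col \<Lambda> C \<kappa> \<Longrightarrow> \<rho> \<in> \<Lambda> \<Longrightarrow> v \<in> \<rho> \<Longrightarrow> w \<in> \<rho> \<Longrightarrow> \<kappa> v = \<kappa> w \<Longrightarrow> v = w"
  unfolding proper_col_def by (auto dest: inj_onD)

lemma card_colors: "proper_col \<Lambda> C \<kappa> \<Longrightarrow> \<sigma> \<in> \<Lambda> \<Longrightarrow> card (\<kappa> ` \<sigma>) = card \<sigma>"
  unfolding proper_col_def by (simp add: card_image)

text \<open>Colours of \<open>F\<close> never occur in the link of \<open>F\<close>, so they may be dropped from \<open>S\<close>.\<close>

lemma link_rank_selected_colors:
  assumes "proper_col \<Lambda> C \<kappa>" "\<kappa> ` F \<subseteq> S"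
  shows "link (rank_selected \<Lambda> \<kappa> S) F = rank_selected (link \<Lambda> F) \<kappa> (S - \<kappa> ` F)"
proof -
  have "rank_selected (link \<Lambda> F) \<kappa> S = rank_selected (link \<Lambda> F) \<kappa> (S - \<kappa> ` F)"
    using proper_col_link[OF assms(1), of F] unfolding rank_selected_def proper_col_def by blast
  thus ?thesis using link_rank_selected[OF assms(2)] by simp
qed

lemma link_rank_selected_vertex:
  assumes "proper_col \<Lambda> C \<kappa>" "\<kappa> u \<in> S"
  shows "link (rank_selected \<Lambda> \<kappa> S) {u} = rank_selected (link \<Lambda> {u}) \<kappa> (S - {\<kappa> u})"
  using link_rank_selected_colors[OF assms(1), of "{u}" S] assms(2) by simp

lemma face_minus_vertex_rank_selected:
  assumes sc: "simplicial_complex \<Lambda>" and col: "proper_col \<Lambda> C \<kappa>"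
    and \<tau>: "\<tau> \<in> rank_selected \<Lambda> \<kappa> S" and u: "u \<in> \<tau>"
  shows "\<tau> - {u} \<in> rank_selected (link \<Lambda> {u}) \<kappa> (S - {\<kappa> u})"
proof -
  have \<tau>L: "\<tau> \<in> \<Lambda>" "\<kappa> ` \<tau> \<subseteq> S" using \<tau> unfolding rank_selected_def by auto
  have "inj_on \<kappa> \<tau>" using col \<tau>L(1) unfolding proper_col_def by blast
  hence "\<kappa> ` (\<tau> - {u}) \<subseteq> S - {\<kappa> u}" using u \<tau>L(2) by (auto dest: inj_onD)
  moreover have "\<tau> - {u} \<in> link \<Lambda> {u}"
    using \<tau>L(1) sc_closed[OF sc \<tau>L(1)] u unfolding link_def by (auto simp: insert_absorb)
  ultimately show ?thesis unfolding rank_selected_def by simp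
qed

text \<open>\<open>cm_upto K \<Lambda> n\<close>: the homological Cohen--Macaulay condition in dimension \<open>n - 1\<close>,
  i.e.\ every link (including \<open>\<Lambda>\<close> itself) is acyclic below its top degree.
  \<open>doubly_cm\<close> additionally asks this for all vertex deletions of links.\<close>

definition cm_upto :: "'k::field itself \<Rightarrow> 'a::linorder set set \<Rightarrow> nat \<Rightarrow> bool" where
  "cm_upto K \<Lambda> n \<longleftrightarrow> (\<forall>\<sigma>\<in>\<Lambda>. \<forall>m. m + card \<sigma> < n \<longrightarrow> hvanish K (link \<Lambda> \<sigma>) m)"

definition doubly_cm :: "'k::field itself \<Rightarrow> 'a::linorder set set \<Rightarrow> nat \<Rightarrow> bool" where
  "doubly_cm K \<Lambda> n \<longleftrightarrow> cm_upto K \<Lambda> n \<and>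
     (\<forall>\<sigma>\<in>\<Lambda>. \<forall>w m. m + card \<sigma> < n \<longrightarrow> hvanish K (delete (link \<Lambda> \<sigma>) {w}) m)"

lemma cm_upto_acyclic:
  assumes "simplicial_complex \<Lambda>" "cm_upto K \<Lambda> n" "m < n"
  shows "hvanish K \<Lambda> m"
proof -
  have "hvanish K (link \<Lambda> {}) m" using assms sc_empty unfolding cm_upto_def by fastforce
  thus ?thesis by (simp add: link_empty)
qed

lemma cm_upto_link:
  assumes sc: "simplicial_complex \<Lambda>" and cm: "cm_upto K \<Lambda> n" and F: "F \<in> \<Lambda>"
  shows "cm_upto K (link \<Lambda> F) (n - card F)"
  unfolding cm_upto_def
proof (intro ballI allI impI)
  fix \<sigma> m assume s: "\<sigma> \<in> link \<Lambda> F" and "m + card \<sigma> < n - card F"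
  thus "hvanish K (link (link \<Lambda> F) \<sigma>) m"
    using cm link_card_split[OF sc F s] unfolding cm_upto_def by auto
qed

lemma doubly_cm_link:
  assumes sc: "simplicial_complex \<Lambda>" and dc: "doubly_cm K \<Lambda> n" and F: "F \<in> \<Lambda>"
  shows "doubly_cm K (link \<Lambda> F) (n - card F)"
  unfolding doubly_cm_def
proof (intro conjI ballI allI impI)
  show "cm_upto K (link \<Lambda> F) (n - card F)" using cm_upto_link[OF sc _ F] dc
    unfolding doubly_cm_def by blast
  fix \<sigma> w m assume s: "\<sigma> \<in> link \<Lambda> F" and "m + card \<sigma> < n - card F"
  thus "hvanish K (delete (link (link \<Lambda> F) \<sigma>) {w}) m"
    using dc link_card_split[OF sc F s] unfolding doubly_cm_def by auto
qed

lemma cm_upto_delete: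
  assumes "doubly_cm K \<Lambda> n"
  shows "cm_upto K (delete \<Lambda> {u}) n"
  unfolding cm_upto_def
proof (intro ballI allI impI)
  fix \<sigma> m assume "\<sigma> \<in> delete \<Lambda> {u}" and m: "m + card \<sigma> < n"
  hence "\<sigma> \<in> \<Lambda>" "u \<notin> \<sigma>" by (auto simp: delete_def)
  thus "hvanish K (link (delete \<Lambda> {u}) \<sigma>) m"
    using assms m link_delete[of u \<sigma> \<Lambda>] unfolding doubly_cm_def by auto
qed

text \<open>In the top degree this is exactly
  surjectivity of \<open>H(\<Gamma>) \<rightarrow> H(\<Gamma>, cost \<tau>)\<close>.\<close>

definition cycle_ext :: "'k::field itself \<Rightarrow> 'a::linorder set set \<Rightarrow> 'a set \<Rightarrow> nat \<Rightarrow> bool" where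
  "cycle_ext K \<Gamma> \<tau> n \<longleftrightarrow> (\<forall>c::'a set \<Rightarrow> 'k. c \<in> chains \<Gamma> n \<and> (\<forall>\<rho>. \<tau> \<subseteq> \<rho> \<longrightarrow> bd \<Gamma> c \<rho> = 0)
      \<longrightarrow> (\<exists>z\<in>chains \<Gamma> n. bd \<Gamma> z = (\<lambda>_. 0) \<and> (\<forall>\<rho>. \<tau> \<subseteq> \<rho> \<longrightarrow> z \<rho> = c \<rho>)))"

lemma cycle_ext_empty: "cycle_ext K \<Gamma> {} n"
  unfolding cycle_ext_def by (auto simp: fun_eq_iff)

lemma cycle_ext_bdry:
  fixes K :: "'k::field itself"
  assumes "finite V" "\<Union>\<Gamma> \<subseteq> V"
  shows "cycle_ext K \<Gamma> \<tau> n \<longleftrightarrow> (\<forall>c::'a::linorder set \<Rightarrow> 'k. c \<in> chains \<Gamma> n \<and> (\<forall>\<rho>. \<tau> \<subseteq> \<rho> \<longrightarrow> bdry V c \<rho> = 0)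
     \<longrightarrow> (\<exists>z\<in>chains \<Gamma> n. (\<forall>\<sigma>. bdry V z \<sigma> = 0) \<and> (\<forall>\<rho>. \<tau> \<subseteq> \<rho> \<longrightarrow> z \<rho> = c \<rho>)))"
proof -
  have e: "\<And>c l. c \<in> chains \<Gamma> l \<Longrightarrow> bd \<Gamma> c = bdry V c" by (rule bd_eq_bdry[OF assms])
  have z: "(bd \<Gamma> z = (\<lambda>_. 0)) = (\<forall>\<sigma>. bdry V z \<sigma> = 0)" if "z \<in> chains \<Gamma> n" for z :: "'a set \<Rightarrow> 'k"
    using e[OF that] by (simp add: fun_eq_iff)
  show ?thesis unfolding cycle_ext_def
  proof (intro iffI allI impI)
    fix c :: "'a set \<Rightarrow> 'k"
    assume H: "\<forall>c::'a set \<Rightarrow> 'k. c \<in> chains \<Gamma> n \<and> (\<forall>\<rho>. \<tau> \<subseteq> \<rho> \<longrightarrow> bd \<Gamma> c \<rho> = 0)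
      \<longrightarrow> (\<exists>z\<in>chains \<Gamma> n. bd \<Gamma> z = (\<lambda>_. 0) \<and> (\<forall>\<rho>. \<tau> \<subseteq> \<rho> \<longrightarrow> z \<rho> = c \<rho>))"
      and c: "c \<in> chains \<Gamma> n \<and> (\<forall>\<rho>. \<tau> \<subseteq> \<rho> \<longrightarrow> bdry V c \<rho> = 0)"
    have "\<forall>\<rho>. \<tau> \<subseteq> \<rho> \<longrightarrow> bd \<Gamma> c \<rho> = 0" using c e[of c n] by simp
    then obtain z where "z \<in> chains \<Gamma> n" "bd \<Gamma> z = (\<lambda>_. 0)" "\<forall>\<rho>. \<tau> \<subseteq> \<rho> \<longrightarrow> z \<rho> = c \<rho>"
      using H[rule_format, of c] c by blast
    thus "\<exists>z\<in>chains \<Gamma> n. (\<forall>\<sigma>. bdry V z \<sigma> = 0) \<and> (\<forall>\<rho>. \<tau> \<subseteq> \<rho> \<longrightarrow> z \<rho> = c \<rho>)"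
      using z by blast
  next
    fix c :: "'a set \<Rightarrow> 'k"
    assume H: "\<forall>c::'a set \<Rightarrow> 'k. c \<in> chains \<Gamma> n \<and> (\<forall>\<rho>. \<tau> \<subseteq> \<rho> \<longrightarrow> bdry V c \<rho> = 0)
      \<longrightarrow> (\<exists>z\<in>chains \<Gamma> n. (\<forall>\<sigma>. bdry V z \<sigma> = 0) \<and> (\<forall>\<rho>. \<tau> \<subseteq> \<rho> \<longrightarrow> z \<rho> = c \<rho>))"
      and c: "c \<in> chains \<Gamma> n \<and> (\<forall>\<rho>. \<tau> \<subseteq> \<rho> \<longrightarrow> bd \<Gamma> c \<rho> = 0)"
    have "\<forall>\<rho>. \<tau> \<subseteq> \<rho> \<longrightarrow> bdry V c \<rho> = 0" using c e[of c n] by simp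
    then obtain z where "z \<in> chains \<Gamma> n" "\<forall>\<sigma>. bdry V z \<sigma> = 0" "\<forall>\<rho>. \<tau> \<subseteq> \<rho> \<longrightarrow> z \<rho> = c \<rho>"
      using H[rule_format, of c] c by blast
    thus "\<exists>z\<in>chains \<Gamma> n. bd \<Gamma> z = (\<lambda>_. 0) \<and> (\<forall>\<rho>. \<tau> \<subseteq> \<rho> \<longrightarrow> z \<rho> = c \<rho>)"
      using z by blast
  qed
qed

lemma cycle_ext_imp_rel_surj:
  fixes K :: "'k::field itself"
  assumes ext: "cycle_ext K \<Gamma> \<tau> n"
  shows "rel_surj K \<Gamma> (cost \<Gamma> \<tau>) n"
  unfolding rel_surj_def
proof (intro allI impI)
  fix c :: "'a set \<Rightarrow> 'k" assume c: "c \<in> chains \<Gamma> n \<and> bd \<Gamma> c \<in> chains (cost \<Gamma> \<tau>) (n - 1)"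
  hence "\<forall>\<rho>. \<tau> \<subseteq> \<rho> \<longrightarrow> bd \<Gamma> c \<rho> = 0" unfolding chains_def cost_def by blast
  then obtain z where z: "z \<in> chains \<Gamma> n" "bd \<Gamma> z = (\<lambda>_. 0)" "\<forall>\<rho>. \<tau> \<subseteq> \<rho> \<longrightarrow> z \<rho> = c \<rho>"
    using ext c unfolding cycle_ext_def by blast
  have zero: "(\<lambda>_. 0) \<in> chains \<Gamma> (Suc n)" "bd \<Gamma> (\<lambda>_. 0::'k) = (\<lambda>_. 0)"
    unfolding chains_def bd_def by auto
  have "(\<lambda>\<sigma>. c \<sigma> - z \<sigma> - bd \<Gamma> (\<lambda>_. 0) \<sigma>) \<in> chains (cost \<Gamma> \<tau>) n"
    unfolding chains_def mem_Collect_eq zero(2)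
  proof (intro allI impI)
    fix \<rho> assume nz: "c \<rho> - z \<rho> - 0 \<noteq> 0"
    hence "c \<rho> \<noteq> 0 \<or> z \<rho> \<noteq> 0" by auto
    hence "\<rho> \<in> \<Gamma> \<and> card \<rho> = n" using c z(1) unfolding chains_def by blast
    moreover have "\<not> \<tau> \<subseteq> \<rho>" using z(3) nz by auto
    ultimately show "\<rho> \<in> cost \<Gamma> \<tau> \<and> card \<rho> = n" unfolding cost_def by simp
  qed
  thus "\<exists>z\<in>chains \<Gamma> n. bd \<Gamma> z = (\<lambda>_. 0) \<and>
          (\<exists>b\<in>chains \<Gamma> (Suc n). (\<lambda>\<sigma>. c \<sigma> - z \<sigma> - bd \<Gamma> b \<sigma>) \<in> chains (cost \<Gamma> \<tau>) n)"
    using z zero by blast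
qed

text \<open>Conversely, in the top degree \<open>n\<close> of an \<open>(n - 1)\<close>-dimensional complex (where there are
  no boundaries to divide by) surjectivity onto \<open>H(\<Gamma>, cost \<tau>)\<close> gives cycle extension at \<open>\<tau>\<close>.\<close>

lemma rel_surj_imp_cycle_ext:
  fixes K :: "'k::field itself" and \<Gamma> :: "'a::linorder set set"
  assumes sc: "simplicial_complex \<Gamma>" and hd: "has_dim \<Gamma> n" and rs: "rel_surj K \<Gamma> (cost \<Gamma> \<tau>) n"
  shows "cycle_ext K \<Gamma> \<tau> n"
  unfolding cycle_ext_def
proof (intro allI impI)
  fix c :: "'a set \<Rightarrow> 'k" assume c: "c \<in> chains \<Gamma> n \<and> (\<forall>\<rho>. \<tau> \<subseteq> \<rho> \<longrightarrow> bd \<Gamma> c \<rho> = 0)"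
  have rel_cycle: "bd \<Gamma> c \<in> chains (cost \<Gamma> \<tau>) (n - 1)" unfolding chains_def mem_Collect_eq
  proof (intro allI impI)
    fix \<rho> assume nz: "bd \<Gamma> c \<rho> \<noteq> 0"
    then obtain v where v0: "v \<in> {v. v \<notin> \<rho> \<and> insert v \<rho> \<in> \<Gamma>}"
      and nz_term: "(- 1) ^ card {u\<in>\<rho>. u < v} * c (insert v \<rho>) \<noteq> 0"
      unfolding bd_def by (rule sum.not_neutral_contains_not_neutral)
    have v: "v \<notin> \<rho>" "insert v \<rho> \<in> \<Gamma>" "c (insert v \<rho>) \<noteq> 0"
      using v0 nz_term by (auto simp del: power_minus1_even)
    have r: "\<rho> \<in> \<Gamma>" using sc_closed[OF sc v(2)] by blast
    have "card (insert v \<rho>) = n" using c v(3) unfolding chains_def by blast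
    hence "card \<rho> = n - 1" using v(1) sc_finite_face[OF sc r] by simp
    moreover have "\<not> \<tau> \<subseteq> \<rho>" using c nz by blast
    ultimately show "\<rho> \<in> cost \<Gamma> \<tau> \<and> card \<rho> = n - 1" using r unfolding cost_def by simp
  qed
  then obtain z b where z: "z \<in> chains \<Gamma> n" "bd \<Gamma> z = (\<lambda>_. 0)" "b \<in> chains \<Gamma> (Suc n)"
    "(\<lambda>\<sigma>. c \<sigma> - z \<sigma> - bd \<Gamma> b \<sigma>) \<in> chains (cost \<Gamma> \<tau>) n"
    using rs[unfolded rel_surj_def, rule_format, OF conjI[OF conjunct1[OF c] rel_cycle]] by blast
  have "b \<sigma> = 0" for \<sigma>
  proof (rule ccontr)
    assume "b \<sigma> \<noteq> 0"
    hence "\<sigma> \<in> \<Gamma>" "card \<sigma> = Suc n" using z(3) unfolding chains_def by auto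
    thus False using hd unfolding has_dim_def by auto
  qed
  hence bd0: "bd \<Gamma> b \<sigma> = 0" for \<sigma> unfolding bd_def by simp
  have "z \<rho> = c \<rho>" if t: "\<tau> \<subseteq> \<rho>" for \<rho>
  proof (rule ccontr)
    assume "z \<rho> \<noteq> c \<rho>"
    hence "c \<rho> - z \<rho> - bd \<Gamma> b \<rho> \<noteq> 0" using bd0 by simp
    hence "\<rho> \<in> cost \<Gamma> \<tau>" using z(4) unfolding chains_def by blast
    thus False using t unfolding cost_def by blast
  qed
  thus "\<exists>z\<in>chains \<Gamma> n. bd \<Gamma> z = (\<lambda>_. 0) \<and> (\<forall>\<rho>. \<tau> \<subseteq> \<rho> \<longrightarrow> z \<rho> = c \<rho>)" using z by blast
qed

lemma contract_chain_rank_selected: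
  assumes sc: "simplicial_complex \<Lambda>" and col: "proper_col \<Lambda> C \<kappa>" and kv: "\<kappa> v = i"
    and b: "b \<in> chains (rank_selected \<Lambda> \<kappa> (insert i S)) (Suc m)"
  shows "contract v b \<in> chains (rank_selected (link \<Lambda> {v}) \<kappa> S) m"
  unfolding chains_def mem_Collect_eq
proof (intro allI impI)
  fix \<sigma> assume "contract v b \<sigma> \<noteq> 0"
  hence vs: "v \<notin> \<sigma>" and "b (insert v \<sigma>) \<noteq> 0" unfolding contract_def by (auto split: if_splits)
  hence face: "insert v \<sigma> \<in> \<Lambda>" "\<kappa> ` insert v \<sigma> \<subseteq> insert i S" "card (insert v \<sigma>) = Suc m"
    using b unfolding chains_def rank_selected_def by auto
  have "inj_on \<kappa> (insert v \<sigma>)" using col face(1) unfolding proper_col_def by blast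
  hence "\<kappa> ` \<sigma> \<subseteq> S" using face(2) kv vs by (auto simp: inj_on_def)
  moreover have "\<sigma> \<in> link \<Lambda> {v}" using face(1) vs sc_closed[OF sc face(1)] unfolding link_def by auto
  moreover have "card \<sigma> = m" using face(3) vs sc_finite_face[OF sc face(1)] by simp
  ultimately show "\<sigma> \<in> rank_selected (link \<Lambda> {v}) \<kappa> S \<and> card \<sigma> = m"
    unfolding rank_selected_def by simp
qed

text \<open>A filling \<open>b\<^sub>1\<close> in \<open>\<Lambda>\<^sub>{S \<union> {i}}\<close> is corrected, around each vertex of colour \<open>i\<close>,
  by a filling of its (cycle) contraction inside the vertex link.\<close>

lemma rank_selected_acyclic_step:
  fixes K :: "'k::field itself" and \<Lambda> :: "'a::linorder set set"
  assumes sc: "simplicial_complex \<Lambda>" and col: "proper_col \<Lambda> C \<kappa>" and iS: "i \<notin> S"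
    and big: "hvanish K (rank_selected \<Lambda> \<kappa> (insert i S)) m"
    and links: "\<And>v. v \<in> \<Union>\<Lambda> \<Longrightarrow> \<kappa> v = i \<Longrightarrow> hvanish K (rank_selected (link \<Lambda> {v}) \<kappa> S) m"
  shows "hvanish K (rank_selected \<Lambda> \<kappa> S) m"
proof -
  define V where "V = \<Union>\<Lambda>"
  define W where "W = {v\<in>V. \<kappa> v = i}"
  define \<Gamma> where "\<Gamma> = rank_selected \<Lambda> \<kappa> S"
  define \<Gamma>1 where "\<Gamma>1 = rank_selected \<Lambda> \<kappa> (insert i S)"
  have fV: "finite V" unfolding V_def by (rule sc_finite_vertices[OF sc])
  have sub: "\<Gamma> \<subseteq> \<Gamma>1" unfolding \<Gamma>_def \<Gamma>1_def rank_selected_def by auto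
  have V\<Gamma>: "\<Union>\<Gamma> \<subseteq> V" "\<Union>\<Gamma>1 \<subseteq> V" "\<And>v. \<Union>(rank_selected (link \<Lambda> {v}) \<kappa> S) \<subseteq> V"
    unfolding V_def \<Gamma>_def \<Gamma>1_def rank_selected_def link_def by auto
  show ?thesis unfolding \<Gamma>_def[symmetric] hvanish_bdry[OF fV V\<Gamma>(1)]
  proof (intro allI impI)
    fix c :: "'a set \<Rightarrow> 'k" assume c: "c \<in> chains \<Gamma> m \<and> (\<forall>\<sigma>. bdry V c \<sigma> = 0)"
    obtain b1 where b1: "b1 \<in> chains \<Gamma>1 (Suc m)" "\<And>\<sigma>. bdry V b1 \<sigma> = c \<sigma>"
      using big[unfolded \<Gamma>1_def[symmetric] hvanish_bdry[OF fV V\<Gamma>(2)]] c chains_mono[OF sub] by blast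
    have fb1: "finite_supp b1" by (rule chains_finite_supp[OF sc_rank_selected[OF sc] b1(1)[unfolded \<Gamma>1_def]])
    have c_avoids: "c \<rho> = 0" if "v \<in> W" "v \<in> \<rho>" for v \<rho>
      using c that iS unfolding chains_def \<Gamma>_def rank_selected_def W_def by blast
    have cyc: "bdry V (contract v b1) \<sigma> = 0" if "v \<in> W" for v \<sigma>
      using that c_avoids unfolding W_def by (intro contract_cycle[OF fV _ fb1 b1(2)]) auto
    have "\<exists>\<delta>. \<delta> \<in> chains (rank_selected (link \<Lambda> {v}) \<kappa> S) (Suc m)
              \<and> (\<forall>\<sigma>. bdry V \<delta> \<sigma> = contract v b1 \<sigma>)" if v: "v \<in> W" for v
    proof -
      have "contract v b1 \<in> chains (rank_selected (link \<Lambda> {v}) \<kappa> S) m"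
        using v b1(1) unfolding W_def \<Gamma>1_def by (intro contract_chain_rank_selected[OF sc col]) auto
      thus ?thesis using links[of v] v cyc[OF v] unfolding hvanish_bdry[OF fV V\<Gamma>(3)] W_def V_def
        by blast
    qed
    then obtain \<delta> where \<delta>: "\<And>v. v \<in> W \<Longrightarrow> \<delta> v \<in> chains (rank_selected (link \<Lambda> {v}) \<kappa> S) (Suc m)"
      "\<And>v \<sigma>. v \<in> W \<Longrightarrow> bdry V (\<delta> v) \<sigma> = contract v b1 \<sigma>" by metis
    define b0 where "b0 = (\<lambda>\<rho>. if \<rho> \<inter> W = {} then b1 \<rho> else 0)"
    define b where "b = (\<lambda>\<rho>. b0 \<rho> + (\<Sum>v\<in>W. \<delta> v \<rho>))"
    have "b0 \<in> chains \<Gamma> (Suc m)"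
      using b1(1) unfolding b0_def chains_def \<Gamma>_def \<Gamma>1_def rank_selected_def W_def V_def by auto
    moreover have "(\<lambda>\<rho>. \<Sum>v\<in>W. \<delta> v \<rho>) \<in> chains \<Gamma> (Suc m)"
    proof (rule chains_sum)
      fix v assume v: "v \<in> W"
      have "rank_selected (link \<Lambda> {v}) \<kappa> S \<subseteq> \<Gamma>" unfolding \<Gamma>_def rank_selected_def link_def by auto
      thus "\<delta> v \<in> chains \<Gamma> (Suc m)" using chains_mono \<delta>(1)[OF v] by blast
    qed
    ultimately have "b \<in> chains \<Gamma> (Suc m)" unfolding b_def by (rule chains_add)
    moreover have "bdry V b \<sigma> = c \<sigma>" for \<sigma>
    proof -
      have one: "v = w" if "b1 \<rho> \<noteq> 0" "v \<in> \<rho> \<inter> W" "w \<in> \<rho> \<inter> W" for \<rho> v w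
      proof (rule proper_col_unique[OF col])
        show "\<rho> \<in> \<Lambda>" using that(1) b1(1) unfolding chains_def \<Gamma>1_def rank_selected_def by blast
      qed (use that(2,3) in \<open>auto simp: W_def\<close>)
      have "bdry V b \<sigma> = bdry V b0 \<sigma> + (\<Sum>v\<in>W. contract v b1 \<sigma>)"
        unfolding b_def bdry_add bdry_sum using \<delta>(2) by simp
      also have "\<dots> = bdry V b1 \<sigma>" unfolding b0_def
        by (rule bdry_star_decomposition[OF fV _ fb1 one cyc, symmetric]) (auto simp: W_def)
      finally show ?thesis using b1(2) by simp
    qed
    ultimately show "\<exists>b\<in>chains \<Gamma> (Suc m). \<forall>\<sigma>. bdry V b \<sigma> = c \<sigma>" by blast
  qed
qed

text \<open>Rank selections of a properly coloured Cohen--Macaulay complex are acyclic below their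
  top degree (the homological half of Stanley's theorem); colours outside \<open>S\<close> are removed one at
  a time, the vertex links being again properly coloured CM complexes with one colour less.\<close>

lemma rank_selected_acyclic:
  fixes K :: "'k::field itself" and \<Lambda> :: "'a::linorder set set"
  assumes "simplicial_complex \<Lambda>" "proper_col \<Lambda> C \<kappa>" "finite C" "cm_upto K \<Lambda> (card C)"
    "S \<subseteq> C" "m < card S"
  shows "hvanish K (rank_selected \<Lambda> \<kappa> S) m"
  using assms
proof (induction "card (C - S)" arbitrary: \<Lambda> C S m)
  case 0
  hence "S = C" by auto
  thus ?case using "0.prems" rank_selected_all[of \<Lambda> C \<kappa>] cm_upto_acyclic by metis
next
  case (Suc k)
  note sc = Suc.prems(1) and col = Suc.prems(2) and fC = Suc.prems(3) and cm = Suc.prems(4)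
    and SC = Suc.prems(5) and mS = Suc.prems(6)
  obtain i where i: "i \<in> C" "i \<notin> S" using Suc.hyps(2) SC by (metis Diff_eq_empty_iff card.empty
        nat.distinct(1) subsetI)
  have fS: "finite S" using SC fC finite_subset by blast
  show ?case
  proof (rule rank_selected_acyclic_step[OF sc col i(2)])
    show "hvanish K (rank_selected \<Lambda> \<kappa> (insert i S)) m"
    proof (rule Suc.hyps(1)[OF _ sc col fC cm])
      show "k = card (C - insert i S)" using Suc.hyps(2) i by (simp add: Diff_insert2[symmetric])
      show "insert i S \<subseteq> C" "m < card (insert i S)" using i SC mS fS by auto
    qed
    fix v assume v: "v \<in> \<Union>\<Lambda>" "\<kappa> v = i"
    have vf: "{v} \<in> \<Lambda>" by (rule sc_vertex_face[OF sc v(1)])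
    show "hvanish K (rank_selected (link \<Lambda> {v}) \<kappa> S) m"
    proof (rule Suc.hyps(1)[OF _ sc_link[OF sc vf]])
      show "k = card ((C - {i}) - S)" using Suc.hyps(2) i by (simp add: Diff_insert2[symmetric]
          Diff_insert[symmetric] insert_commute)
      show "proper_col (link \<Lambda> {v}) (C - {i}) \<kappa>" using proper_col_vertex_link[OF col, of v] v(2) by simp
      show "cm_upto K (link \<Lambda> {v}) (card (C - {i}))"
        using cm_upto_link[OF sc cm vf] i fC by simp
      show "finite (C - {i})" "S \<subseteq> C - {i}" "m < card S" using fC SC i mS by auto
    qed
  qed
qed

text \<open>\<open>link_cycles_extend K \<Gamma> u m\<close>: every \<open>m\<close>-cycle \<open>\<zeta>\<close> of the vertex link of \<open>u\<close> is the
  part at \<open>u\<close> of an \<open>(m+1)\<close>-cycle of \<open>\<Gamma>\<close>, i.e.\ some cycle agrees with the cone \<open>u * \<zeta>\<close>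
  on all faces through \<open>u\<close>.\<close>

definition link_cycles_extend :: "'k::field itself \<Rightarrow> 'a::linorder set set \<Rightarrow> 'a \<Rightarrow> nat \<Rightarrow> bool" where
  "link_cycles_extend K \<Gamma> u m \<longleftrightarrow>
     (\<forall>\<zeta>::'a set \<Rightarrow> 'k. \<zeta> \<in> chains (link \<Gamma> {u}) m \<and> (\<forall>\<sigma>. bdry (\<Union>\<Gamma>) \<zeta> \<sigma> = 0)
        \<longrightarrow> (\<exists>z\<in>chains \<Gamma> (Suc m). (\<forall>\<sigma>. bdry (\<Union>\<Gamma>) z \<sigma> = 0) \<and> (\<forall>\<rho>. u \<in> \<rho> \<longrightarrow> z \<rho> = cone u \<zeta> \<rho>)))"

lemma link_cycles_extend_bdry:
  fixes K :: "'k::field itself" and \<Gamma> :: "'a::linorder set set"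
  assumes sc: "simplicial_complex \<Gamma>" and fV: "finite V" and V\<Gamma>: "\<Union>\<Gamma> \<subseteq> V"
  shows "link_cycles_extend K \<Gamma> u m \<longleftrightarrow>
     (\<forall>\<zeta>::'a set \<Rightarrow> 'k. \<zeta> \<in> chains (link \<Gamma> {u}) m \<and> (\<forall>\<sigma>. bdry V \<zeta> \<sigma> = 0)
        \<longrightarrow> (\<exists>z\<in>chains \<Gamma> (Suc m). (\<forall>\<sigma>. bdry V z \<sigma> = 0) \<and> (\<forall>\<rho>. u \<in> \<rho> \<longrightarrow> z \<rho> = cone u \<zeta> \<rho>)))"
proof -
  have e: "bdry (\<Union>\<Gamma>) c = bdry V c" if "c \<in> chains \<Gamma> l" for c :: "'a set \<Rightarrow> 'k" and l
    by (rule bdry_indep[OF sc_finite_vertices[OF sc] fV order_refl V\<Gamma> that])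
  have e_link: "bdry (\<Union>\<Gamma>) \<zeta> = bdry V \<zeta>" if "\<zeta> \<in> chains (link \<Gamma> {u}) m" for \<zeta> :: "'a set \<Rightarrow> 'k"
    using e chains_mono[OF link_subset that] by blast
  show ?thesis unfolding link_cycles_extend_def
  proof (intro iffI allI impI)
    fix \<zeta> :: "'a set \<Rightarrow> 'k"
    assume H: "\<forall>\<zeta>::'a set \<Rightarrow> 'k. \<zeta> \<in> chains (link \<Gamma> {u}) m \<and> (\<forall>\<sigma>. bdry (\<Union>\<Gamma>) \<zeta> \<sigma> = 0)
        \<longrightarrow> (\<exists>z\<in>chains \<Gamma> (Suc m). (\<forall>\<sigma>. bdry (\<Union>\<Gamma>) z \<sigma> = 0) \<and> (\<forall>\<rho>. u \<in> \<rho> \<longrightarrow> z \<rho> = cone u \<zeta> \<rho>))"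
      and \<zeta>: "\<zeta> \<in> chains (link \<Gamma> {u}) m \<and> (\<forall>\<sigma>. bdry V \<zeta> \<sigma> = 0)"
    then obtain z where "z \<in> chains \<Gamma> (Suc m)" "\<forall>\<sigma>. bdry (\<Union>\<Gamma>) z \<sigma> = 0" "\<forall>\<rho>. u \<in> \<rho> \<longrightarrow> z \<rho> = cone u \<zeta> \<rho>"
      using e_link by force
    thus "\<exists>z\<in>chains \<Gamma> (Suc m). (\<forall>\<sigma>. bdry V z \<sigma> = 0) \<and> (\<forall>\<rho>. u \<in> \<rho> \<longrightarrow> z \<rho> = cone u \<zeta> \<rho>)"
      using e by metis
  next
    fix \<zeta> :: "'a set \<Rightarrow> 'k"
    assume H: "\<forall>\<zeta>::'a set \<Rightarrow> 'k. \<zeta> \<in> chains (link \<Gamma> {u}) m \<and> (\<forall>\<sigma>. bdry V \<zeta> \<sigma> = 0)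
        \<longrightarrow> (\<exists>z\<in>chains \<Gamma> (Suc m). (\<forall>\<sigma>. bdry V z \<sigma> = 0) \<and> (\<forall>\<rho>. u \<in> \<rho> \<longrightarrow> z \<rho> = cone u \<zeta> \<rho>))"
      and \<zeta>: "\<zeta> \<in> chains (link \<Gamma> {u}) m \<and> (\<forall>\<sigma>. bdry (\<Union>\<Gamma>) \<zeta> \<sigma> = 0)"
    then obtain z where "z \<in> chains \<Gamma> (Suc m)" "\<forall>\<sigma>. bdry V z \<sigma> = 0" "\<forall>\<rho>. u \<in> \<rho> \<longrightarrow> z \<rho> = cone u \<zeta> \<rho>"
      using e_link by force
    thus "\<exists>z\<in>chains \<Gamma> (Suc m). (\<forall>\<sigma>. bdry (\<Union>\<Gamma>) z \<sigma> = 0) \<and> (\<forall>\<rho>. u \<in> \<rho> \<longrightarrow> z \<rho> = cone u \<zeta> \<rho>)"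
      using e by metis
  qed
qed

text \<open>Cycle extension is inherited from a vertex link: for \<open>u \<in> \<tau>\<close>, extend the contraction
  at \<open>u\<close> inside the link, then complete its cone to a cycle of \<open>\<Gamma>\<close>.\<close>

lemma cycle_ext_from_vertex:
  fixes K :: "'k::field itself" and \<Gamma> :: "'a::linorder set set"
  assumes sc: "simplicial_complex \<Gamma>" and u\<tau>: "u \<in> \<tau>" and \<tau>\<Gamma>: "\<tau> \<in> \<Gamma>"
    and link_ext: "cycle_ext K (link \<Gamma> {u}) (\<tau> - {u}) m"
    and extend: "link_cycles_extend K \<Gamma> u m"
  shows "cycle_ext K \<Gamma> \<tau> (Suc m)"
proof -
  define V where "V = \<Union>\<Gamma>"
  have fV: "finite V" unfolding V_def by (rule sc_finite_vertices[OF sc])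
  have uV: "u \<in> V" using u\<tau> \<tau>\<Gamma> unfolding V_def by blast
  have VL: "\<Union>(link \<Gamma> {u}) \<subseteq> V" unfolding V_def link_def by auto
  have V\<Gamma>: "\<Union>\<Gamma> \<subseteq> V" unfolding V_def by simp
  show ?thesis unfolding cycle_ext_bdry[OF fV V\<Gamma>]
  proof (intro allI impI)
    fix c :: "'a set \<Rightarrow> 'k" assume c: "c \<in> chains \<Gamma> (Suc m) \<and> (\<forall>\<rho>. \<tau> \<subseteq> \<rho> \<longrightarrow> bdry V c \<rho> = 0)"
    define \<beta> where "\<beta> = contract u c"
    have \<beta>_chain: "\<beta> \<in> chains (link \<Gamma> {u}) m" unfolding \<beta>_def using contract_chain[OF sc] c by blast
    have fc: "finite_supp c" using chains_finite_supp[OF sc] c by blast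
    have \<beta>_rel: "bdry V \<beta> \<rho> = 0" if "\<tau> - {u} \<subseteq> \<rho>" for \<rho>
    proof (cases "u \<in> \<rho>")
      case False
      have "\<tau> \<subseteq> insert u \<rho>" using that by auto
      thus ?thesis using c False unfolding \<beta>_def bdry_contract[OF fV uV fc] by (simp add: contract_def)
    qed (simp add: \<beta>_def bdry_contract[OF fV uV fc] contract_vanish)
    obtain \<zeta> where \<zeta>: "\<zeta> \<in> chains (link \<Gamma> {u}) m" "\<forall>\<sigma>. bdry V \<zeta> \<sigma> = 0"
      "\<forall>\<rho>. \<tau> - {u} \<subseteq> \<rho> \<longrightarrow> \<zeta> \<rho> = \<beta> \<rho>"
      using link_ext[unfolded cycle_ext_bdry[OF fV VL]] \<beta>_chain \<beta>_rel by blast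
    obtain z where z: "z \<in> chains \<Gamma> (Suc m)" "\<forall>\<sigma>. bdry V z \<sigma> = 0" "\<forall>\<rho>. u \<in> \<rho> \<longrightarrow> z \<rho> = cone u \<zeta> \<rho>"
      using extend \<zeta>(1,2) unfolding link_cycles_extend_def V_def by blast
    have "z \<rho> = c \<rho>" if r: "\<tau> \<subseteq> \<rho>" for \<rho>
    proof -
      have ur: "u \<in> \<rho>" using r u\<tau> by auto
      have "\<zeta> (\<rho> - {u}) = \<beta> (\<rho> - {u})" using \<zeta>(3) r by blast
      hence "z \<rho> = cone u \<beta> \<rho>" using z(3) ur unfolding cone_def by simp
      thus "z \<rho> = c \<rho>" unfolding \<beta>_def cone_contract using ur by simp
    qed
    thus "\<exists>z\<in>chains \<Gamma> (Suc m). (\<forall>\<sigma>. bdry V z \<sigma> = 0) \<and> (\<forall>\<rho>. \<tau> \<subseteq> \<rho> \<longrightarrow> z \<rho> = c \<rho>)"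
      using z by blast
  qed
qed

lemma bdry_cone_link_cycle:
  fixes \<zeta> :: "'a::linorder set \<Rightarrow> 'k::comm_ring_1"
  assumes sc: "simplicial_complex \<Gamma>" and uV: "u \<in> \<Union>\<Gamma>"
    and \<zeta>: "\<zeta> \<in> chains (link \<Gamma> {u}) m" and cyc: "\<And>\<sigma>. bdry (\<Union>\<Gamma>) \<zeta> \<sigma> = 0"
  shows "bdry (\<Union>\<Gamma>) (cone u \<zeta>) \<sigma> = \<zeta> \<sigma>"
proof (rule bdry_cone_cycle[OF sc_finite_vertices[OF sc] uV _ _ cyc])
  show "finite_supp \<zeta>"
    by (rule chains_finite_supp[OF sc_link[OF sc sc_vertex_face[OF sc uV]] \<zeta>])
  show "\<zeta> \<rho> = 0" if "u \<in> \<rho>" for \<rho> using \<zeta> that unfolding chains_def link_def by blast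
qed

text \<open>If the deletion of \<open>u\<close> is acyclic in degree \<open>m\<close>, link cycles of \<open>u\<close> extend: an
  \<open>m\<close>-cycle \<open>\<zeta>\<close> of the link bounds some \<open>w\<close> avoiding \<open>u\<close>, and \<open>u * \<zeta> - w\<close> is a cycle.\<close>

lemma link_cycles_extend_if_deletion_acyclic:
  fixes K :: "'k::field itself" and \<Gamma> :: "'a::linorder set set"
  assumes sc: "simplicial_complex \<Gamma>" and uV: "u \<in> \<Union>\<Gamma>"
    and acyc: "hvanish K (delete \<Gamma> {u}) m"
  shows "link_cycles_extend K \<Gamma> u m"
  unfolding link_cycles_extend_def
proof (intro allI impI)
  fix \<zeta> :: "'a set \<Rightarrow> 'k" assume \<zeta>: "\<zeta> \<in> chains (link \<Gamma> {u}) m \<and> (\<forall>\<sigma>. bdry (\<Union>\<Gamma>) \<zeta> \<sigma> = 0)"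
  define V where "V = \<Union>\<Gamma>"
  have fV: "finite V" unfolding V_def by (rule sc_finite_vertices[OF sc])
  have sub: "delete \<Gamma> {u} \<subseteq> \<Gamma>" unfolding delete_def by auto
  have VD: "\<Union>(delete \<Gamma> {u}) \<subseteq> V" using sub unfolding V_def by auto
  have "\<zeta> \<in> chains (delete \<Gamma> {u}) m" using \<zeta> unfolding chains_def link_def delete_def by auto
  then obtain w where w: "w \<in> chains (delete \<Gamma> {u}) (Suc m)" "\<forall>\<sigma>. bdry V w \<sigma> = \<zeta> \<sigma>"
    using acyc[unfolded hvanish_bdry[OF fV VD]] \<zeta> unfolding V_def by blast
  have cone_bdry: "bdry V (cone u \<zeta>) \<sigma> = \<zeta> \<sigma>" for \<sigma>
    unfolding V_def using \<zeta> by (intro bdry_cone_link_cycle[OF sc uV]) auto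
  define z where "z = (\<lambda>\<rho>. cone u \<zeta> \<rho> - w \<rho>)"
  have "z \<in> chains \<Gamma> (Suc m)" unfolding z_def
    using chains_diff cone_chain[OF sc] chains_mono[OF sub w(1)] \<zeta> by blast
  moreover have "\<forall>\<sigma>. bdry V z \<sigma> = 0" unfolding z_def bdry_diff cone_bdry using w(2) by simp
  moreover have "\<forall>\<rho>. u \<in> \<rho> \<longrightarrow> z \<rho> = cone u \<zeta> \<rho>"
    using w(1) unfolding z_def chains_def delete_def by auto
  ultimately show "\<exists>z\<in>chains \<Gamma> (Suc m). (\<forall>\<sigma>. bdry (\<Union>\<Gamma>) z \<sigma> = 0) \<and> (\<forall>\<rho>. u \<in> \<rho> \<longrightarrow> z \<rho> = cone u \<zeta> \<rho>)"
    unfolding V_def by blast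
qed

lemma link_cycles_extend_if_cycle_ext:
  fixes K :: "'k::field itself" and \<Gamma> :: "'a::linorder set set"
  assumes sc: "simplicial_complex \<Gamma>" and uV: "u \<in> \<Union>\<Gamma>"
    and ext: "cycle_ext K \<Gamma> {u} (Suc m)"
  shows "link_cycles_extend K \<Gamma> u m"
  unfolding link_cycles_extend_def
proof (intro allI impI)
  fix \<zeta> :: "'a set \<Rightarrow> 'k" assume \<zeta>: "\<zeta> \<in> chains (link \<Gamma> {u}) m \<and> (\<forall>\<sigma>. bdry (\<Union>\<Gamma>) \<zeta> \<sigma> = 0)"
  have fV: "finite (\<Union>\<Gamma>)" by (rule sc_finite_vertices[OF sc])
  have cone_bdry: "bdry (\<Union>\<Gamma>) (cone u \<zeta>) \<rho> = \<zeta> \<rho>" for \<rho>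
    using \<zeta> by (intro bdry_cone_link_cycle[OF sc uV]) auto
  have "\<zeta> \<rho> = 0" if "u \<in> \<rho>" for \<rho> using \<zeta> that unfolding chains_def link_def by blast
  hence "\<forall>\<rho>. {u} \<subseteq> \<rho> \<longrightarrow> bdry (\<Union>\<Gamma>) (cone u \<zeta>) \<rho> = 0" by (simp add: cone_bdry)
  moreover have "cone u \<zeta> \<in> chains \<Gamma> (Suc m)" using cone_chain[OF sc] \<zeta> by blast
  ultimately show "\<exists>z\<in>chains \<Gamma> (Suc m). (\<forall>\<sigma>. bdry (\<Union>\<Gamma>) z \<sigma> = 0) \<and> (\<forall>\<rho>. u \<in> \<rho> \<longrightarrow> z \<rho> = cone u \<zeta> \<rho>)"
    using ext[unfolded cycle_ext_bdry[OF fV order_refl]] by auto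
qed

text \<open>Rank selections of a properly coloured doubly Cohen--Macaulay complex have the cycle
  extension property for each of their faces (top degree), by induction on the face:
  pass to the link of a vertex \<open>u\<close> of the face, and extend link cycles of \<open>u\<close> using the
  acyclicity of the deletion of \<open>u\<close> (a rank selection of a CM complex).\<close>

lemma rank_selected_cycle_ext:
  fixes K :: "'k::field itself" and \<Lambda> :: "'a::linorder set set"
  assumes "simplicial_complex \<Lambda>" "proper_col \<Lambda> C \<kappa>" "finite C" "doubly_cm K \<Lambda> (card C)"
    "S \<subseteq> C" "\<tau> \<in> rank_selected \<Lambda> \<kappa> S"
  shows "cycle_ext K (rank_selected \<Lambda> \<kappa> S) \<tau> (card S)"
  using assms
proof (induction "card \<tau>" arbitrary: \<Lambda> C S \<tau>)
  case 0
  hence "\<tau> = {}" using sc_finite_face[of \<Lambda> \<tau>] unfolding rank_selected_def by auto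
  thus ?case by (simp add: cycle_ext_empty)
next
  case (Suc k)
  note sc = Suc.prems(1) and col = Suc.prems(2) and fC = Suc.prems(3) and dc = Suc.prems(4)
    and SC = Suc.prems(5) and \<tau>R = Suc.prems(6)
  define \<Gamma> where "\<Gamma> = rank_selected \<Lambda> \<kappa> S"
  obtain u where u: "u \<in> \<tau>" using Suc.hyps(2) by (metis card.empty ex_in_conv nat.distinct(1))
  have \<tau>L: "\<tau> \<in> \<Lambda>" "\<kappa> ` \<tau> \<subseteq> S" using \<tau>R unfolding rank_selected_def by auto
  have ku: "\<kappa> u \<in> S" using \<tau>L u by auto
  have uf: "{u} \<in> \<Lambda>" using sc_closed[OF sc \<tau>L(1)] u by blast
  have fS: "finite S" using SC fC finite_subset by blast
  have cS: "card S = Suc (card (S - {\<kappa> u}))" using card_Suc_Diff1[OF fS ku] by simp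
  have sc\<Gamma>: "simplicial_complex \<Gamma>" unfolding \<Gamma>_def by (rule sc_rank_selected[OF sc])
  have \<tau>\<Gamma>: "\<tau> \<in> \<Gamma>" unfolding \<Gamma>_def by (rule \<tau>R)
  have "cycle_ext K \<Gamma> \<tau> (Suc (card (S - {\<kappa> u})))"
  proof (rule cycle_ext_from_vertex[OF sc\<Gamma> u \<tau>\<Gamma>])
    have "cycle_ext K (rank_selected (link \<Lambda> {u}) \<kappa> (S - {\<kappa> u})) (\<tau> - {u}) (card (S - {\<kappa> u}))"
    proof (rule Suc.hyps(1)[OF _ sc_link[OF sc uf] proper_col_vertex_link[OF col]])
      show "k = card (\<tau> - {u})" using Suc.hyps(2) u sc_finite_face[OF sc \<tau>L(1)] by simp
      show "finite (C - {\<kappa> u})" "S - {\<kappa> u} \<subseteq> C - {\<kappa> u}" using fC SC by auto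
      show "doubly_cm K (link \<Lambda> {u}) (card (C - {\<kappa> u}))"
        using doubly_cm_link[OF sc dc uf] ku SC fC by (simp add: subsetD)
      show "\<tau> - {u} \<in> rank_selected (link \<Lambda> {u}) \<kappa> (S - {\<kappa> u})"
        by (rule face_minus_vertex_rank_selected[OF sc col \<tau>R u])
    qed
    thus "cycle_ext K (link \<Gamma> {u}) (\<tau> - {u}) (card (S - {\<kappa> u}))"
      unfolding \<Gamma>_def link_rank_selected_vertex[OF col ku] .
    have "hvanish K (rank_selected (delete \<Lambda> {u}) \<kappa> S) (card (S - {\<kappa> u}))"
      using rank_selected_acyclic[OF sc_delete[OF sc] proper_col_mono[OF col] fC
          cm_upto_delete[OF dc] SC] cS by (simp add: delete_def)
    thus "link_cycles_extend K \<Gamma> u (card (S - {\<kappa> u}))"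
      using uf unfolding \<Gamma>_def delete_rank_selected[symmetric]
      by (intro link_cycles_extend_if_deletion_acyclic[OF sc\<Gamma>[unfolded \<Gamma>_def]])
        (auto simp: rank_selected_def ku)
  qed
  thus ?case unfolding \<Gamma>_def cS .
qed

text \<open>In a rank selection \<open>T\<close> of a properly coloured complex, every top face contains exactly
  one vertex of each colour \<open>i \<in> T\<close>; so the boundary of a top chain whose contractions at
  the \<open>i\<close>-coloured vertices are cycles is the sum of these contractions.\<close>

lemma bdry_full_colored:
  fixes b :: "'a::linorder set \<Rightarrow> 'k::comm_ring_1"
  assumes fV: "finite V" and col: "proper_col \<Lambda> C \<kappa>" and XV: "{v\<in>\<Union>\<Lambda>. \<kappa> v = i} \<subseteq> V"
    and b: "b \<in> chains (rank_selected \<Lambda> \<kappa> T) (card T)" and fT: "finite T" and iT: "i \<in> T"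
    and fb: "finite_supp b"
    and cyc: "\<And>v \<sigma>. v \<in> {v\<in>\<Union>\<Lambda>. \<kappa> v = i} \<Longrightarrow> bdry V (contract v b) \<sigma> = 0"
  shows "bdry V b \<sigma> = (\<Sum>v\<in>{v\<in>\<Union>\<Lambda>. \<kappa> v = i}. contract v b \<sigma>)"
proof -
  define X where "X = {v\<in>\<Union>\<Lambda>. \<kappa> v = i}"
  have face: "\<rho> \<in> \<Lambda>" "\<kappa> ` \<rho> = T" if "b \<rho> \<noteq> 0" for \<rho>
  proof -
    have r: "\<rho> \<in> \<Lambda>" "\<kappa> ` \<rho> \<subseteq> T" "card \<rho> = card T"
      using that b unfolding chains_def rank_selected_def by auto
    show "\<rho> \<in> \<Lambda>" by (rule r(1))
    show "\<kappa> ` \<rho> = T" using card_subset_eq[OF fT r(2)] card_colors[OF col r(1)] r(3) by simp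
  qed
  have one: "v = w" if "b \<rho> \<noteq> 0" "v \<in> \<rho> \<inter> X" "w \<in> \<rho> \<inter> X" for \<rho> v w
    by (rule proper_col_unique[OF col face(1)[OF that(1)]]) (use that(2,3) in \<open>auto simp: X_def\<close>)
  have "(\<lambda>\<rho>. if \<rho> \<inter> X = {} then b \<rho> else 0) = (\<lambda>_. 0)"
  proof
    fix \<rho> show "(if \<rho> \<inter> X = {} then b \<rho> else 0) = 0"
    proof (cases "b \<rho> = 0")
      case False
      then obtain x where "x \<in> \<rho>" "\<kappa> x = i" using face[OF False] iT by (metis imageE)
      hence "x \<in> \<rho> \<inter> X" using face(1)[OF False] unfolding X_def by auto
      thus ?thesis by auto
    qed simp
  qed
  moreover have "bdry V (\<lambda>_. 0) \<sigma> = (0::'k)" unfolding bdry_def by simp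
  ultimately show ?thesis
    using bdry_star_decomposition[OF fV XV[folded X_def] fb one cyc[folded X_def]] unfolding X_def
    by simp
qed

lemma contract_chain_link_rank_selected:
  assumes sc: "simplicial_complex \<Delta>" and col: "proper_col \<Delta> C \<kappa>" and uf: "{u} \<in> \<Delta>"
    and ku: "\<kappa> u \<in> S" and kv: "\<kappa> v = i" and iS: "i \<notin> S" and uv: "u \<noteq> v"
    and b: "b \<in> chains (rank_selected (link \<Delta> {u}) \<kappa> (insert i (S - {\<kappa> u}))) (Suc m)"
  shows "contract v b \<in> chains (link (rank_selected (link \<Delta> {v}) \<kappa> S) {u}) m"
proof -
  have "contract v b \<in> chains (rank_selected (link (link \<Delta> {u}) {v}) \<kappa> (S - {\<kappa> u})) m"
    by (rule contract_chain_rank_selected[OF sc_link[OF sc uf] proper_col_vertex_link[OF col] kv b])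
  also have "link (link \<Delta> {u}) {v} = link (link \<Delta> {v}) {u}"
    using link_link[OF sc, of "{u}" "{v}"] link_link[OF sc, of "{v}" "{u}"] uv by (simp add: Un_commute)
  also have "rank_selected (link (link \<Delta> {v}) {u}) \<kappa> (S - {\<kappa> u})
      = link (rank_selected (link \<Delta> {v}) \<kappa> S) {u}"
    by (rule link_rank_selected_vertex[OF proper_col_vertex_link[OF col] ku, symmetric])
  finally show ?thesis .
qed

lemma vertex_link_cycles_extend:
  fixes K :: "'k::field itself" and \<Delta> :: "'a::linorder set set"
  assumes sc: "simplicial_complex \<Delta>" and col: "proper_col \<Delta> C \<kappa>" and fC: "finite C"
    and vf: "{v} \<in> \<Delta>" and dc: "doubly_cm K (link \<Delta> {v}) (card C - 1)"
    and SC: "S \<subseteq> C" and kv: "\<kappa> v \<in> C - S" and ku: "\<kappa> u \<in> S" and uv: "{u, v} \<in> \<Delta>"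
  shows "link_cycles_extend K (rank_selected (link \<Delta> {v}) \<kappa> S) u (card (S - {\<kappa> u}))"
proof (rule link_cycles_extend_if_cycle_ext)
  have u_link: "{u} \<in> rank_selected (link \<Delta> {v}) \<kappa> S"
    using uv ku kv sc_closed[OF sc uv, of "{u}"] unfolding rank_selected_def link_def
    by (auto simp: insert_commute)
  thus "simplicial_complex (rank_selected (link \<Delta> {v}) \<kappa> S)" "u \<in> \<Union>(rank_selected (link \<Delta> {v}) \<kappa> S)"
    using sc_rank_selected[OF sc_link[OF sc vf]] by auto
  have "cycle_ext K (rank_selected (link \<Delta> {v}) \<kappa> S) {u} (card S)"
  proof (rule rank_selected_cycle_ext[OF sc_link[OF sc vf] proper_col_vertex_link[OF col] _ _ _ u_link])
    show "finite (C - {\<kappa> v})" "S \<subseteq> C - {\<kappa> v}" using fC SC kv by auto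
    show "doubly_cm K (link \<Delta> {v}) (card (C - {\<kappa> v}))" using dc kv fC by simp
  qed
  moreover have "card S = Suc (card (S - {\<kappa> u}))"
    using card_Suc_Diff1[OF finite_subset[OF SC fC] ku] by simp
  ultimately show "cycle_ext K (rank_selected (link \<Delta> {v}) \<kappa> S) {u} (Suc (card (S - {\<kappa> u})))"
    by simp
qed

text \<open>Let \<open>i \<notin> S\<close> be a colour and \<open>\<zeta>\<close> a cycle of the link of \<open>u\<close> in
  \<open>\<Delta>\<^sub>S\<close>. In the CM vertex link of \<open>u\<close>, \<open>\<zeta>\<close> bounds a chain \<open>b\<close> in which the colour \<open>\<kappa> u\<close> is traded
  for \<open>i\<close>; then \<open>\<zeta>\<close> is the sum of the contractions of \<open>b\<close> at the \<open>i\<close>-coloured vertices.\<close>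

lemma link_cycle_split_by_color:
  fixes K :: "'k::field itself" and \<Delta> :: "'a::linorder set set" and \<zeta> :: "'a set \<Rightarrow> 'k"
  assumes sc: "simplicial_complex \<Delta>" and col: "proper_col \<Delta> C \<kappa>" and fC: "finite C"
    and dc: "doubly_cm K (link \<Delta> {u}) (card C - 1)"
    and SC: "S \<subseteq> C" and i: "i \<in> C - S" and uf: "{u} \<in> \<Delta>" and ku: "\<kappa> u \<in> S"
    and \<zeta>: "\<zeta> \<in> chains (rank_selected (link \<Delta> {u}) \<kappa> (S - {\<kappa> u})) (card (S - {\<kappa> u}))"
    and cyc: "\<forall>\<sigma>. bdry (\<Union>\<Delta>) \<zeta> \<sigma> = 0"
  shows "\<exists>b. b \<in> chains (rank_selected (link \<Delta> {u}) \<kappa> (insert i (S - {\<kappa> u}))) (Suc (card (S - {\<kappa> u})))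
    \<and> (\<forall>v\<in>{v\<in>\<Union>(link \<Delta> {u}). \<kappa> v = i}. \<forall>\<sigma>. bdry (\<Union>\<Delta>) (contract v b) \<sigma> = 0)
    \<and> (\<forall>\<sigma>. \<zeta> \<sigma> = (\<Sum>v\<in>{v\<in>\<Union>(link \<Delta> {u}). \<kappa> v = i}. contract v b \<sigma>))"
proof -
  define V where "V = \<Union>\<Delta>"
  define \<Lambda> where "\<Lambda> = link \<Delta> {u}"
  define S' where "S' = S - {\<kappa> u}"
  define X where "X = {v\<in>\<Union>\<Lambda>. \<kappa> v = i}"
  have fV: "finite V" unfolding V_def by (rule sc_finite_vertices[OF sc])
  have V\<Lambda>: "\<Union>(rank_selected \<Lambda> \<kappa> (insert i S')) \<subseteq> V" "X \<subseteq> V"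
    unfolding V_def \<Lambda>_def X_def rank_selected_def link_def by auto
  have sc\<Lambda>: "simplicial_complex \<Lambda>" unfolding \<Lambda>_def by (rule sc_link[OF sc uf])
  have col\<Lambda>: "proper_col \<Lambda> (C - {\<kappa> u}) \<kappa>" unfolding \<Lambda>_def by (rule proper_col_vertex_link[OF col])
  have fS': "finite S'" using SC fC unfolding S'_def by (auto intro: finite_subset)
  have cS': "card (insert i S') = Suc (card S')" using i fS' unfolding S'_def by simp
  have "hvanish K (rank_selected \<Lambda> \<kappa> (insert i S')) (card S')"
  proof (rule rank_selected_acyclic[OF sc\<Lambda> col\<Lambda>])
    show "cm_upto K \<Lambda> (card (C - {\<kappa> u}))"
      using dc ku SC fC unfolding \<Lambda>_def doubly_cm_def by (simp add: subsetD)
    show "finite (C - {\<kappa> u})" "insert i S' \<subseteq> C - {\<kappa> u}" "card S' < card (insert i S')"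
      using fC SC i ku cS' unfolding S'_def by auto
  qed
  moreover have "rank_selected \<Lambda> \<kappa> S' \<subseteq> rank_selected \<Lambda> \<kappa> (insert i S')"
    unfolding rank_selected_def by auto
  hence "\<zeta> \<in> chains (rank_selected \<Lambda> \<kappa> (insert i S')) (card S')"
    using chains_mono \<zeta> unfolding \<Lambda>_def S'_def by blast
  ultimately obtain b where b: "b \<in> chains (rank_selected \<Lambda> \<kappa> (insert i S')) (Suc (card S'))"
    "\<And>\<sigma>. bdry V b \<sigma> = \<zeta> \<sigma>"
    using cyc unfolding hvanish_bdry[OF fV V\<Lambda>(1)] V_def by blast
  have fb: "finite_supp b" by (rule chains_finite_supp[OF sc_rank_selected[OF sc\<Lambda>] b(1)])
  have b_cyc: "bdry V (contract v b) \<sigma> = 0" if v: "v \<in> X" for v \<sigma>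
  proof (rule contract_cycle[OF fV _ fb b(2)])
    show "v \<in> V" using v V\<Lambda>(2) by auto
    show "\<zeta> \<rho> = 0" if "v \<in> \<rho>" for \<rho>
      using \<zeta> v that i unfolding chains_def rank_selected_def X_def S'_def \<Lambda>_def by blast
  qed
  have "\<zeta> \<sigma> = (\<Sum>v\<in>X. contract v b \<sigma>)" for \<sigma>
    using bdry_full_colored[OF fV col\<Lambda> V\<Lambda>(2)[unfolded X_def] b(1)[folded cS'] _ _ fb]
      b_cyc fS' b(2) unfolding X_def by simp
  thus ?thesis using b(1) b_cyc unfolding \<Lambda>_def S'_def X_def V_def by blast
qed

lemma link_cycle_piece_extends:
  fixes K :: "'k::field itself" and \<Delta> :: "'a::linorder set set" and b :: "'a set \<Rightarrow> 'k"
  assumes sc: "simplicial_complex \<Delta>" and col: "proper_col \<Delta> C \<kappa>" and fC: "finite C"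
    and dc_links: "\<And>v. {v} \<in> \<Delta> \<Longrightarrow> doubly_cm K (link \<Delta> {v}) (card C - 1)"
    and SC: "S \<subseteq> C" and i: "i \<in> C - S" and uf: "{u} \<in> \<Delta>" and ku: "\<kappa> u \<in> S"
    and v: "v \<in> \<Union>(link \<Delta> {u})" "\<kappa> v = i"
    and b: "b \<in> chains (rank_selected (link \<Delta> {u}) \<kappa> (insert i (S - {\<kappa> u}))) (Suc (card (S - {\<kappa> u})))"
    and cyc: "\<And>\<sigma>. bdry (\<Union>\<Delta>) (contract v b) \<sigma> = 0"
  shows "\<exists>Z\<in>chains (rank_selected (link \<Delta> {v}) \<kappa> S) (Suc (card (S - {\<kappa> u}))).
           (\<forall>\<sigma>. bdry (\<Union>\<Delta>) Z \<sigma> = 0) \<and> (\<forall>\<rho>. u \<in> \<rho> \<longrightarrow> Z \<rho> = cone u (contract v b) \<rho>)"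
proof -
  obtain \<sigma>0 where \<sigma>0: "\<sigma>0 \<in> link \<Delta> {u}" "v \<in> \<sigma>0" using v by auto
  hence s0: "\<sigma>0 \<union> {u} \<in> \<Delta>" "u \<notin> \<sigma>0" unfolding link_def by auto
  have uv: "u \<noteq> v" using s0(2) \<sigma>0(2) by auto
  have uvD: "{u, v} \<in> \<Delta>" using sc_closed[OF sc s0(1)] \<sigma>0(2) by auto
  have vf: "{v} \<in> \<Delta>" using sc_closed[OF sc uvD] by auto
  have kv: "\<kappa> v \<in> C - S" using v(2) i by simp
  have Vv: "\<Union>(rank_selected (link \<Delta> {v}) \<kappa> S) \<subseteq> \<Union>\<Delta>"
    unfolding rank_selected_def link_def by auto
  note \<Gamma>v = sc_rank_selected[OF sc_link[OF sc vf]] sc_finite_vertices[OF sc] Vv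
  have chain: "contract v b \<in> chains (link (rank_selected (link \<Delta> {v}) \<kappa> S) {u}) (card (S - {\<kappa> u}))"
    using contract_chain_link_rank_selected[OF sc col uf ku v(2) _ uv b] i by blast
  have ext: "link_cycles_extend K (rank_selected (link \<Delta> {v}) \<kappa> S) u (card (S - {\<kappa> u}))"
    by (rule vertex_link_cycles_extend[OF sc col fC vf dc_links[OF vf] SC kv ku uvD])
  have cyc': "\<forall>\<sigma>. bdry (\<Union>\<Delta>) (contract v b) \<sigma> = 0" using cyc by blast
  show ?thesis
    using ext[unfolded link_cycles_extend_bdry[OF \<Gamma>v], rule_format, OF conjI[OF chain cyc']] .
qed

text \<open>Split the link cycle by colour \<open>i\<close> and add up the completed pieces.\<close>

lemma link_cycles_extend_missing_color:
  fixes K :: "'k::field itself" and \<Delta> :: "'a::linorder set set"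
  assumes sc: "simplicial_complex \<Delta>" and col: "proper_col \<Delta> C \<kappa>" and fC: "finite C"
    and dc_links: "\<And>v. {v} \<in> \<Delta> \<Longrightarrow> doubly_cm K (link \<Delta> {v}) (card C - 1)"
    and SC: "S \<subseteq> C" and i: "i \<in> C - S" and uf: "{u} \<in> \<Delta>" and ku: "\<kappa> u \<in> S"
  shows "link_cycles_extend K (rank_selected \<Delta> \<kappa> S) u (card (S - {\<kappa> u}))"
proof -
  define \<Gamma> where "\<Gamma> = rank_selected \<Delta> \<kappa> S"
  define m where "m = card (S - {\<kappa> u})"
  define X where "X = {v\<in>\<Union>(link \<Delta> {u}). \<kappa> v = i}"
  have V\<Gamma>: "\<Union>\<Gamma> \<subseteq> \<Union>\<Delta>" unfolding \<Gamma>_def rank_selected_def by auto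
  show ?thesis unfolding \<Gamma>_def[symmetric] m_def[symmetric] link_cycles_extend_bdry[OF
      sc_rank_selected[OF sc, of \<kappa> S, folded \<Gamma>_def] sc_finite_vertices[OF sc] V\<Gamma>]
  proof (intro allI impI)
    fix \<zeta> :: "'a set \<Rightarrow> 'k" assume \<zeta>: "\<zeta> \<in> chains (link \<Gamma> {u}) m \<and> (\<forall>\<sigma>. bdry (\<Union>\<Delta>) \<zeta> \<sigma> = 0)"
    have \<zeta>': "\<zeta> \<in> chains (rank_selected (link \<Delta> {u}) \<kappa> (S - {\<kappa> u})) (card (S - {\<kappa> u}))"
      using \<zeta> unfolding \<Gamma>_def m_def link_rank_selected_vertex[OF col ku] by simp
    obtain b where b: "b \<in> chains (rank_selected (link \<Delta> {u}) \<kappa> (insert i (S - {\<kappa> u}))) (Suc m)"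
      "\<forall>v\<in>X. \<forall>\<sigma>. bdry (\<Union>\<Delta>) (contract v b) \<sigma> = 0" "\<forall>\<sigma>. \<zeta> \<sigma> = (\<Sum>v\<in>X. contract v b \<sigma>)"
      using link_cycle_split_by_color[OF sc col fC dc_links[OF uf] SC i uf ku \<zeta>' conjunct2[OF \<zeta>]]
      unfolding m_def X_def by (elim exE conjE) blast
    have "\<forall>v\<in>X. \<exists>Z\<in>chains (rank_selected (link \<Delta> {v}) \<kappa> S) (Suc m).
        (\<forall>\<sigma>. bdry (\<Union>\<Delta>) Z \<sigma> = 0) \<and> (\<forall>\<rho>. u \<in> \<rho> \<longrightarrow> Z \<rho> = cone u (contract v b) \<rho>)"
    proof
      fix v assume v: "v \<in> X"
      hence v': "v \<in> \<Union>(link \<Delta> {u})" "\<kappa> v = i" unfolding X_def by auto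
      have "bdry (\<Union>\<Delta>) (contract v b) \<sigma> = 0" for \<sigma> using b(2) v by blast
      from link_cycle_piece_extends[OF sc col fC dc_links SC i uf ku v' b(1)[unfolded m_def] this]
      show "\<exists>Z\<in>chains (rank_selected (link \<Delta> {v}) \<kappa> S) (Suc m).
        (\<forall>\<sigma>. bdry (\<Union>\<Delta>) Z \<sigma> = 0) \<and> (\<forall>\<rho>. u \<in> \<rho> \<longrightarrow> Z \<rho> = cone u (contract v b) \<rho>)"
        unfolding m_def .
    qed
    then obtain Z where Z: "\<And>v. v \<in> X \<Longrightarrow> Z v \<in> chains (rank_selected (link \<Delta> {v}) \<kappa> S) (Suc m)"
      "\<And>v \<sigma>. v \<in> X \<Longrightarrow> bdry (\<Union>\<Delta>) (Z v) \<sigma> = 0"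
      "\<And>v \<rho>. v \<in> X \<Longrightarrow> u \<in> \<rho> \<Longrightarrow> Z v \<rho> = cone u (contract v b) \<rho>"
      by (metis bchoice)
    define z where "z = (\<lambda>\<rho>. \<Sum>v\<in>X. Z v \<rho>)"
    have "z \<in> chains \<Gamma> (Suc m)" unfolding z_def
    proof (rule chains_sum)
      fix v assume v: "v \<in> X"
      have "rank_selected (link \<Delta> {v}) \<kappa> S \<subseteq> \<Gamma>" unfolding \<Gamma>_def rank_selected_def link_def by auto
      thus "Z v \<in> chains \<Gamma> (Suc m)" using chains_mono Z(1)[OF v] by blast
    qed
    moreover have "\<forall>\<sigma>. bdry (\<Union>\<Delta>) z \<sigma> = 0" unfolding z_def bdry_sum using Z(2) by simp
    moreover have "z \<rho> = cone u \<zeta> \<rho>" if "u \<in> \<rho>" for \<rho>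
    proof -
      have "z \<rho> = (\<Sum>v\<in>X. cone u (contract v b) \<rho>)" unfolding z_def using Z(3) that by simp
      also have "\<dots> = cone u (\<lambda>\<sigma>. \<Sum>v\<in>X. contract v b \<sigma>) \<rho>" by (rule cone_sum[symmetric])
      also have "(\<lambda>\<sigma>. \<Sum>v\<in>X. contract v b \<sigma>) = \<zeta>" using b(3) by (simp add: fun_eq_iff)
      finally show ?thesis .
    qed
    ultimately show "\<exists>z\<in>chains \<Gamma> (Suc m). (\<forall>\<sigma>. bdry (\<Union>\<Delta>) z \<sigma> = 0)
        \<and> (\<forall>\<rho>. u \<in> \<rho> \<longrightarrow> z \<rho> = cone u \<zeta> \<rho>)" by blast
  qed
qed

text \<open>Every proper rank selection of \<open>\<Delta>\<close> has the cycle extension property at each of its faces,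
  provided the vertex links of \<open>\<Delta>\<close> are doubly Cohen--Macaulay: reduce to the link of a vertex
  \<open>u\<close> of the face, and extend link cycles of \<open>u\<close> using a colour missing from \<open>S\<close>.\<close>

lemma rank_selected_cycle_ext_missing_color:
  fixes K :: "'k::field itself" and \<Delta> :: "'a::linorder set set"
  assumes sc: "simplicial_complex \<Delta>" and col: "proper_col \<Delta> C \<kappa>" and fC: "finite C"
    and dc_links: "\<And>v. {v} \<in> \<Delta> \<Longrightarrow> doubly_cm K (link \<Delta> {v}) (card C - 1)"
    and SC: "S \<subseteq> C" and i: "i \<in> C - S" and \<tau>: "\<tau> \<in> rank_selected \<Delta> \<kappa> S"
  shows "cycle_ext K (rank_selected \<Delta> \<kappa> S) \<tau> (card S)"
proof (cases "\<tau> = {}")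
  case True thus ?thesis by (simp add: cycle_ext_empty)
next
  case False
  then obtain u where u: "u \<in> \<tau>" by auto
  have \<tau>D: "\<tau> \<in> \<Delta>" "\<kappa> ` \<tau> \<subseteq> S" using \<tau> unfolding rank_selected_def by auto
  have ku: "\<kappa> u \<in> S" using \<tau>D u by auto
  have uf: "{u} \<in> \<Delta>" using sc_closed[OF sc \<tau>D(1)] u by blast
  have cS: "card S = Suc (card (S - {\<kappa> u}))"
    using card_Suc_Diff1[OF finite_subset[OF SC fC] ku] by simp
  have "cycle_ext K (rank_selected \<Delta> \<kappa> S) \<tau> (Suc (card (S - {\<kappa> u})))"
  proof (rule cycle_ext_from_vertex[OF sc_rank_selected[OF sc] u \<tau>])
    have "cycle_ext K (rank_selected (link \<Delta> {u}) \<kappa> (S - {\<kappa> u})) (\<tau> - {u}) (card (S - {\<kappa> u}))"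
    proof (rule rank_selected_cycle_ext[OF sc_link[OF sc uf] proper_col_vertex_link[OF col]])
      show "finite (C - {\<kappa> u})" "S - {\<kappa> u} \<subseteq> C - {\<kappa> u}" using fC SC by auto
      show "doubly_cm K (link \<Delta> {u}) (card (C - {\<kappa> u}))"
        using dc_links[OF uf] ku SC fC by (simp add: subsetD)
      show "\<tau> - {u} \<in> rank_selected (link \<Delta> {u}) \<kappa> (S - {\<kappa> u})"
        by (rule face_minus_vertex_rank_selected[OF sc col \<tau> u])
    qed
    thus "cycle_ext K (link (rank_selected \<Delta> \<kappa> S) {u}) (\<tau> - {u}) (card (S - {\<kappa> u}))"
      unfolding link_rank_selected_vertex[OF col ku] .
    show "link_cycles_extend K (rank_selected \<Delta> \<kappa> S) u (card (S - {\<kappa> u}))"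
      by (rule link_cycles_extend_missing_color[OF sc col fC dc_links SC i uf ku])
  qed
  thus ?thesis unfolding cS .
qed

lemma buchsbaum_link_cm:
  assumes bb: "buchsbaum K \<Delta> n" and F: "F \<in> \<Delta>" "F \<noteq> {}"
  shows "cm_upto K (link \<Delta> F) (n - card F)"
  unfolding cm_upto_def
proof (intro ballI allI impI)
  have sc: "simplicial_complex \<Delta>" using bb unfolding buchsbaum_def by blast
  fix \<sigma> m assume s: "\<sigma> \<in> link \<Delta> F" and "m + card \<sigma> < n - card F"
  thus "hvanish K (link (link \<Delta> F) \<sigma>) m"
    using bb F link_card_split[OF sc F(1) s] unfolding buchsbaum_def by auto
qed

text \<open>The extra hypothesis on a Buchsbaum complex used for rank selections: vertex deletions
  of links of nonempty faces are acyclic below the top degree. Both doubly Buchsbaum and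
  Buchsbaum* complexes satisfy it.\<close>

definition link_deletions_acyclic :: "'k::field itself \<Rightarrow> 'a::linorder set set \<Rightarrow> nat \<Rightarrow> bool" where
  "link_deletions_acyclic K \<Delta> n \<longleftrightarrow> (\<forall>\<sigma>\<in>\<Delta>. \<sigma> \<noteq> {} \<longrightarrow>
     (\<forall>w m. m + card \<sigma> < n \<longrightarrow> hvanish K (delete (link \<Delta> \<sigma>) {w}) m))"

lemma buchsbaum_vertex_link_doubly_cm:
  assumes bb: "buchsbaum K \<Delta> n" and lda: "link_deletions_acyclic K \<Delta> n" and v: "{v} \<in> \<Delta>"
  shows "doubly_cm K (link \<Delta> {v}) (n - 1)"
  unfolding doubly_cm_def
proof (intro conjI ballI allI impI)
  have sc: "simplicial_complex \<Delta>" using bb unfolding buchsbaum_def by blast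
  show "cm_upto K (link \<Delta> {v}) (n - 1)" using buchsbaum_link_cm[OF bb v] by simp
  fix \<sigma> w m assume s: "\<sigma> \<in> link \<Delta> {v}" and "m + card \<sigma> < n - 1"
  thus "hvanish K (delete (link (link \<Delta> {v}) \<sigma>) {w}) m"
    using lda link_card_split[OF sc v s] unfolding link_deletions_acyclic_def by auto
qed

lemma exists_facet:
  assumes sc: "simplicial_complex \<Delta>" and hd: "has_dim \<Delta> n" and pu: "pure \<Delta>" and s: "\<sigma> \<in> \<Delta>"
  shows "\<exists>F\<in>\<Delta>. \<sigma> \<subseteq> F \<and> card F = n"
proof -
  define M where "M = {\<rho>\<in>\<Delta>. \<sigma> \<subseteq> \<rho>}"
  have fM: "finite M" using sc unfolding M_def simplicial_complex_def by simp
  have "Max (card ` M) \<in> card ` M" using fM s by (intro Max_in) (auto simp: M_def)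
  then obtain F where F0: "F \<in> M" "card F = Max (card ` M)" by auto
  hence F: "F \<in> M" "\<forall>\<rho>\<in>M. card \<rho> \<le> card F" using fM by auto
  have FD: "F \<in> \<Delta>" "\<sigma> \<subseteq> F" using F(1) unfolding M_def by auto
  have "\<rho> = F" if "\<rho> \<in> \<Delta>" "F \<subseteq> \<rho>" for \<rho>
    using F(2) FD that card_seteq[OF sc_finite_face[OF sc that(1)] that(2)] unfolding M_def by auto
  moreover obtain \<sigma>n where "\<sigma>n \<in> \<Delta>" "card \<sigma>n = n" using hd unfolding has_dim_def by auto
  ultimately have "n \<le> card F" using pu FD(1) unfolding pure_def by blast
  moreover have "card F \<le> n" using hd FD(1) unfolding has_dim_def by blast
  ultimately show ?thesis using FD by auto
qed

text \<open>A facet of a properly coloured \<open>(|C| - 1)\<close>-dimensional complex uses every colour, so its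
  \<open>S\<close>-coloured part is a face of \<open>\<Delta>\<^sub>S\<close> with \<open>|S|\<close> vertices.\<close>

lemma facet_rank_part:
  assumes sc: "simplicial_complex \<Delta>" and col: "proper_col \<Delta> C \<kappa>" and fC: "finite C"
    and F: "F \<in> \<Delta>" "card F = card C" and SC: "S \<subseteq> C"
  shows "{x\<in>F. \<kappa> x \<in> S} \<in> rank_selected \<Delta> \<kappa> S" "card {x\<in>F. \<kappa> x \<in> S} = card S"
proof -
  have inF: "{x\<in>F. \<kappa> x \<in> S} \<in> \<Delta>" using sc_closed[OF sc F(1)] by auto
  thus "{x\<in>F. \<kappa> x \<in> S} \<in> rank_selected \<Delta> \<kappa> S" unfolding rank_selected_def by auto
  have "\<kappa> ` F \<subseteq> C" using col F(1) unfolding proper_col_def by blast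
  hence "\<kappa> ` F = C" using card_subset_eq[OF fC] card_colors[OF col F(1)] F(2) by simp
  hence "\<kappa> ` {x\<in>F. \<kappa> x \<in> S} = S" using SC by auto
  thus "card {x\<in>F. \<kappa> x \<in> S} = card S" using card_colors[OF col inF] by simp
qed

text \<open>Rank selections of a properly coloured Buchsbaum complex are Buchsbaum: their links are
  rank selections of the (Cohen--Macaulay) links of \<open>\<Delta>\<close>.\<close>

lemma rank_selected_buchsbaum:
  fixes K :: "'k::field itself" and \<Delta> :: "'a::linorder set set"
  assumes bb: "buchsbaum K \<Delta> (card C)" and col: "proper_col \<Delta> C \<kappa>" and fC: "finite C"
    and SC: "S \<subseteq> C"
  shows "buchsbaum K (rank_selected \<Delta> \<kappa> S) (card S)"
proof -
  define \<Gamma> where "\<Gamma> = rank_selected \<Delta> \<kappa> S"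
  have sc: "simplicial_complex \<Delta>" and hd: "has_dim \<Delta> (card C)" and pu: "pure \<Delta>"
    using bb unfolding buchsbaum_def by auto
  have fS: "finite S" using SC fC finite_subset by blast
  have small: "card \<sigma> \<le> card S" if "\<sigma> \<in> \<Gamma>" for \<sigma>
  proof -
    have "\<sigma> \<in> \<Delta>" "\<kappa> ` \<sigma> \<subseteq> S" using that unfolding \<Gamma>_def rank_selected_def by auto
    thus ?thesis using card_colors[OF col] card_mono[OF fS] by metis
  qed
  have hd\<Gamma>: "has_dim \<Gamma> (card S)"
  proof -
    obtain F where F: "F \<in> \<Delta>" "card F = card C" using hd unfolding has_dim_def by auto
    have "{x\<in>F. \<kappa> x \<in> S} \<in> \<Gamma>" "card {x\<in>F. \<kappa> x \<in> S} = card S"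
      using facet_rank_part[OF sc col fC F SC] unfolding \<Gamma>_def by auto
    thus ?thesis using small unfolding has_dim_def by blast
  qed
  have pu\<Gamma>: "pure \<Gamma>" unfolding pure_def
  proof (intro ballI impI)
    fix \<sigma> \<tau> assume s: "\<sigma> \<in> \<Gamma>" and t: "\<tau> \<in> \<Gamma>" and mx: "\<forall>\<rho>\<in>\<Gamma>. \<sigma> \<subseteq> \<rho> \<longrightarrow> \<rho> = \<sigma>"
    have sD: "\<sigma> \<in> \<Delta>" "\<kappa> ` \<sigma> \<subseteq> S" using s unfolding \<Gamma>_def rank_selected_def by auto
    obtain F where F: "F \<in> \<Delta>" "\<sigma> \<subseteq> F" "card F = card C" using exists_facet[OF sc hd pu sD(1)] by blast
    have "\<sigma> \<subseteq> {x\<in>F. \<kappa> x \<in> S}" using F(2) sD(2) by auto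
    hence "{x\<in>F. \<kappa> x \<in> S} = \<sigma>"
      using mx facet_rank_part(1)[OF sc col fC F(1,3) SC] unfolding \<Gamma>_def by blast
    thus "card \<tau> \<le> card \<sigma>" using facet_rank_part(2)[OF sc col fC F(1,3) SC] small[OF t] by simp
  qed
  have links: "hvanish K (link \<Gamma> F) m" if F: "F \<in> \<Gamma>" "F \<noteq> {}" and m: "m + card F < card S" for F m
  proof -
    have FD: "F \<in> \<Delta>" "\<kappa> ` F \<subseteq> S" using F unfolding \<Gamma>_def rank_selected_def by auto
    have cF: "card (\<kappa> ` F) = card F" by (rule card_colors[OF col FD(1)])
    have cC: "card (C - \<kappa> ` F) = card C - card F"
      using FD SC cF fC by (simp add: card_Diff_subset finite_subset)
    have cS: "card (S - \<kappa> ` F) = card S - card F" using FD cF fS by (simp add: card_Diff_subset finite_subset)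
    have "hvanish K (rank_selected (link \<Delta> F) \<kappa> (S - \<kappa> ` F)) m"
    proof (rule rank_selected_acyclic[OF sc_link[OF sc FD(1)] proper_col_link[OF col]])
      show "cm_upto K (link \<Delta> F) (card (C - \<kappa> ` F))"
        unfolding cC by (rule buchsbaum_link_cm[OF bb FD(1) F(2)])
      show "finite (C - \<kappa> ` F)" "S - \<kappa> ` F \<subseteq> C - \<kappa> ` F" "m < card (S - \<kappa> ` F)"
        using fC SC m cS by auto
    qed
    thus ?thesis unfolding \<Gamma>_def link_rank_selected_colors[OF col FD(2)] .
  qed
  have "simplicial_complex \<Gamma>" unfolding \<Gamma>_def by (rule sc_rank_selected[OF sc])
  thus ?thesis unfolding buchsbaum_def \<Gamma>_def[symmetric] using hd\<Gamma> pu\<Gamma> links by blast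
qed

lemma rank_selected_buchsbaum_star:
  fixes K :: "'k::field itself" and \<Delta> :: "'a::linorder set set"
  assumes bb: "buchsbaum K \<Delta> (card C)" and lda: "link_deletions_acyclic K \<Delta> (card C)"
    and col: "proper_col \<Delta> C \<kappa>" and fC: "finite C" and S: "S \<subset> C"
  shows "buchsbaum_star K (rank_selected \<Delta> \<kappa> S) (card S)"
proof -
  have sc: "simplicial_complex \<Delta>" using bb unfolding buchsbaum_def by blast
  obtain i where i: "i \<in> C - S" using S by blast
  show ?thesis unfolding buchsbaum_star_def
  proof (intro conjI ballI)
    show "buchsbaum K (rank_selected \<Delta> \<kappa> S) (card S)"
      using rank_selected_buchsbaum[OF bb col fC] S by blast
    fix \<tau> assume \<tau>: "\<tau> \<in> rank_selected \<Delta> \<kappa> S"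
    have "cycle_ext K (rank_selected \<Delta> \<kappa> S) \<tau> (card S)"
      using rank_selected_cycle_ext_missing_color[OF sc col fC
          buchsbaum_vertex_link_doubly_cm[OF bb lda] _ i \<tau>] S by blast
    thus "rel_surj K (rank_selected \<Delta> \<kappa> S) (cost (rank_selected \<Delta> \<kappa> S) \<tau>) (card S)"
      by (rule cycle_ext_imp_rel_surj)
  qed
qed

text \<open>Vertex deletions of a complex \<open>L\<close> are acyclic in degree \<open>m\<close> when \<open>L\<close> is, provided link cycles
  of the deleted vertex extend: a filling \<open>b\<close> of a cycle avoiding \<open>w\<close> is corrected by the
  cycle that agrees with \<open>b\<close> on the star of \<open>w\<close>.\<close>

lemma deletion_acyclic_if_link_cycles_extend:
  fixes K :: "'k::field itself" and L :: "'a::linorder set set"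
  assumes sc: "simplicial_complex L" and acyc: "hvanish K L m"
    and ext: "w \<in> \<Union>L \<Longrightarrow> link_cycles_extend K L w m"
  shows "hvanish K (delete L {w}) m"
proof -
  define V where "V = \<Union>L"
  have fV: "finite V" unfolding V_def by (rule sc_finite_vertices[OF sc])
  have sub: "delete L {w} \<subseteq> L" unfolding delete_def by auto
  have VL: "\<Union>L \<subseteq> V" "\<Union>(delete L {w}) \<subseteq> V" unfolding V_def delete_def by auto
  show ?thesis unfolding hvanish_bdry[OF fV VL(2)]
  proof (intro allI impI)
    fix \<beta> :: "'a set \<Rightarrow> 'k" assume \<beta>: "\<beta> \<in> chains (delete L {w}) m \<and> (\<forall>\<sigma>. bdry V \<beta> \<sigma> = 0)"
    obtain b where b: "b \<in> chains L (Suc m)" "\<And>\<sigma>. bdry V b \<sigma> = \<beta> \<sigma>"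
      using acyc[unfolded hvanish_bdry[OF fV VL(1)]] \<beta> chains_mono[OF sub] by blast
    show "\<exists>b\<in>chains (delete L {w}) (Suc m). \<forall>\<sigma>. bdry V b \<sigma> = \<beta> \<sigma>"
    proof (cases "w \<in> V")
      case False
      hence "b \<in> chains (delete L {w}) (Suc m)" using b(1) unfolding chains_def delete_def V_def by auto
      thus ?thesis using b(2) by blast
    next
      case True
      define \<gamma> where "\<gamma> = contract w b"
      have \<gamma>: "\<gamma> \<in> chains (link L {w}) m" unfolding \<gamma>_def by (rule contract_chain[OF sc b(1)])
      have "bdry V \<gamma> \<sigma> = 0" for \<sigma> unfolding \<gamma>_def
        using \<beta> by (intro contract_cycle[OF fV True chains_finite_supp[OF sc b(1)] b(2)])
          (auto simp: chains_def delete_def)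
      then obtain Y where Y: "Y \<in> chains L (Suc m)" "\<forall>\<sigma>. bdry V Y \<sigma> = 0"
        "\<forall>\<rho>. w \<in> \<rho> \<longrightarrow> Y \<rho> = cone w \<gamma> \<rho>"
        using ext \<gamma> True unfolding link_cycles_extend_def V_def by blast
      define b' where "b' = (\<lambda>\<rho>. b \<rho> - Y \<rho>)"
      have "b' \<in> chains (delete L {w}) (Suc m)" unfolding chains_def mem_Collect_eq
      proof (intro allI impI)
        fix \<rho> assume nz: "b' \<rho> \<noteq> 0"
        have "w \<notin> \<rho>"
        proof
          assume wr: "w \<in> \<rho>"
          hence "b \<rho> = Y \<rho>" using Y(3) unfolding \<gamma>_def cone_contract by simp
          thus False using nz unfolding b'_def by simp
        qed
        thus "\<rho> \<in> delete L {w} \<and> card \<rho> = Suc m"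
          using chains_diff[OF b(1) Y(1)] nz unfolding b'_def chains_def delete_def by auto
      qed
      moreover have "\<forall>\<sigma>. bdry V b' \<sigma> = \<beta> \<sigma>" unfolding b'_def bdry_diff using b(2) Y(2) by simp
      ultimately show ?thesis by blast
    qed
  qed
qed

text \<open>Acyclicity of the vertex link in degree \<open>m\<close> also lets link cycles extend: a link cycle
  bounds \<open>\<delta>\<close> inside the link, and \<open>u * \<zeta> - \<delta>\<close> is a cycle.\<close>

lemma link_cycles_extend_if_link_acyclic:
  fixes K :: "'k::field itself" and \<Gamma> :: "'a::linorder set set"
  assumes sc: "simplicial_complex \<Gamma>" and uV: "u \<in> \<Union>\<Gamma>"
    and acyc: "hvanish K (link \<Gamma> {u}) m"
  shows "link_cycles_extend K \<Gamma> u m"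
  unfolding link_cycles_extend_def
proof (intro allI impI)
  fix \<zeta> :: "'a set \<Rightarrow> 'k" assume \<zeta>: "\<zeta> \<in> chains (link \<Gamma> {u}) m \<and> (\<forall>\<sigma>. bdry (\<Union>\<Gamma>) \<zeta> \<sigma> = 0)"
  have VL: "\<Union>(link \<Gamma> {u}) \<subseteq> \<Union>\<Gamma>" using link_subset by blast
  obtain \<delta> where \<delta>: "\<delta> \<in> chains (link \<Gamma> {u}) (Suc m)" "\<forall>\<sigma>. bdry (\<Union>\<Gamma>) \<delta> \<sigma> = \<zeta> \<sigma>"
    using acyc[unfolded hvanish_bdry[OF sc_finite_vertices[OF sc] VL]] \<zeta> by blast
  define z where "z = (\<lambda>\<rho>. cone u \<zeta> \<rho> - \<delta> \<rho>)"
  have "z \<in> chains \<Gamma> (Suc m)" unfolding z_def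
    using chains_diff cone_chain[OF sc] chains_mono[OF link_subset \<delta>(1)] \<zeta> by blast
  moreover have "\<forall>\<sigma>. bdry (\<Union>\<Gamma>) z \<sigma> = 0"
  proof
    fix \<sigma>
    have "bdry (\<Union>\<Gamma>) (cone u \<zeta>) \<sigma> = \<zeta> \<sigma>" using \<zeta> by (intro bdry_cone_link_cycle[OF sc uV]) auto
    thus "bdry (\<Union>\<Gamma>) z \<sigma> = 0" unfolding z_def bdry_diff using \<delta>(2) by simp
  qed
  moreover have "\<forall>\<rho>. u \<in> \<rho> \<longrightarrow> z \<rho> = cone u \<zeta> \<rho>"
    using \<delta>(1) unfolding z_def chains_def link_def by auto
  ultimately show "\<exists>z\<in>chains \<Gamma> (Suc m). (\<forall>\<sigma>. bdry (\<Union>\<Gamma>) z \<sigma> = 0) \<and> (\<forall>\<rho>. u \<in> \<rho> \<longrightarrow> z \<rho> = cone u \<zeta> \<rho>)"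
    by blast
qed

text \<open>Cycle extension descends to vertex links: to extend a chain \<open>c\<close> of the link of \<open>x\<close>, extend
  its cone \<open>x * c\<close> in \<open>L\<close> and contract the resulting cycle at \<open>x\<close> again.\<close>

lemma cycle_ext_vertex_link:
  fixes K :: "'k::field itself" and L :: "'a::linorder set set"
  assumes sc: "simplicial_complex L" and xL: "{x} \<in> L" and x\<tau>: "x \<notin> \<tau>"
    and ext: "cycle_ext K L (insert x \<tau>) (Suc e)"
  shows "cycle_ext K (link L {x}) \<tau> e"
proof -
  define V where "V = \<Union>L"
  have fV: "finite V" unfolding V_def by (rule sc_finite_vertices[OF sc])
  have xV: "x \<in> V" using xL unfolding V_def by blast
  have VL: "\<Union>L \<subseteq> V" "\<Union>(link L {x}) \<subseteq> V" unfolding V_def using link_subset by auto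
  show ?thesis unfolding cycle_ext_bdry[OF fV VL(2)]
  proof (intro allI impI)
    fix c :: "'a set \<Rightarrow> 'k" assume c: "c \<in> chains (link L {x}) e \<and> (\<forall>\<rho>. \<tau> \<subseteq> \<rho> \<longrightarrow> bdry V c \<rho> = 0)"
    have cx: "c \<rho> = 0" if "x \<in> \<rho>" for \<rho> using c that unfolding chains_def link_def by blast
    have fc: "finite_supp c" using chains_finite_supp[OF sc_link[OF sc xL]] c by blast
    have "bdry V (cone x c) \<rho> = 0" if r: "insert x \<tau> \<subseteq> \<rho>" for \<rho>
    proof -
      have "\<tau> \<subseteq> \<rho> - {x}" using r x\<tau> by auto
      hence "cone x (bdry V c) \<rho> = 0" using c unfolding cone_def by simp
      thus ?thesis using bdry_cone[OF fV xV fc cx] cx[of \<rho>] r by simp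
    qed
    moreover have "cone x c \<in> chains L (Suc e)" using cone_chain[OF sc] c by blast
    ultimately obtain Y0 where Y0: "Y0 \<in> chains L (Suc e)" "\<forall>\<sigma>. bdry V Y0 \<sigma> = 0"
      "\<forall>\<rho>. insert x \<tau> \<subseteq> \<rho> \<longrightarrow> Y0 \<rho> = cone x c \<rho>"
      using ext[unfolded cycle_ext_bdry[OF fV VL(1)]] by blast
    define Y where "Y = contract x Y0"
    have "Y \<in> chains (link L {x}) e" unfolding Y_def by (rule contract_chain[OF sc Y0(1)])
    moreover have "\<forall>\<sigma>. bdry V Y \<sigma> = 0"
      unfolding Y_def bdry_contract[OF fV xV chains_finite_supp[OF sc Y0(1)]]
      using Y0(2) by (simp add: contract_def)
    moreover have "Y \<rho> = c \<rho>" if r: "\<tau> \<subseteq> \<rho>" for \<rho>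
    proof (cases "x \<in> \<rho>")
      case True thus ?thesis using cx unfolding Y_def by (simp add: contract_vanish)
    next
      case False
      have "Y0 (insert x \<rho>) = cone x c (insert x \<rho>)" using Y0(3) r by auto
      hence "Y \<rho> = ins_sign x \<rho> * (ins_sign x \<rho> * c \<rho>)"
        using False unfolding Y_def contract_def by (simp add: cone_insert)
      thus ?thesis by (simp add: mult.assoc[symmetric] ins_sign_square)
    qed
    ultimately show "\<exists>z\<in>chains (link L {x}) e. (\<forall>\<sigma>. bdry V z \<sigma> = 0) \<and> (\<forall>\<rho>. \<tau> \<subseteq> \<rho> \<longrightarrow> z \<rho> = c \<rho>)"
      by blast
  qed
qed

lemma buchsbaum_star_link_cycle_ext:
  fixes K :: "'k::field itself" and \<Delta> :: "'a::linorder set set"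
  assumes sc: "simplicial_complex \<Delta>" and hd: "has_dim \<Delta> n"
    and rs: "\<forall>\<tau>\<in>\<Delta>. rel_surj K \<Delta> (cost \<Delta> \<tau>) n"
  shows "finite \<sigma> \<Longrightarrow> \<sigma> \<in> \<Delta> \<Longrightarrow> \<tau> \<in> link \<Delta> \<sigma> \<Longrightarrow> cycle_ext K (link \<Delta> \<sigma>) \<tau> (n - card \<sigma>)"
proof (induction \<sigma> arbitrary: \<tau> rule: finite_induct)
  case empty
  hence "\<tau> \<in> \<Delta>" by (simp add: link_empty)
  hence "cycle_ext K \<Delta> \<tau> n" using rs by (intro rel_surj_imp_cycle_ext[OF sc hd]) blast
  thus ?case by (simp add: link_empty)
next
  case (insert x F)
  define L0 where "L0 = link \<Delta> F"
  have F: "F \<in> \<Delta>" using sc_closed[OF sc insert.prems(1)] by blast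
  have link_x: "link L0 {x} = link \<Delta> (insert x F)"
    unfolding L0_def using link_link[OF sc, of F "{x}"] insert.hyps(2) by simp
  have xL0: "{x} \<in> L0" using insert.prems(1) insert.hyps(2) sc_closed[OF sc insert.prems(1), of "{x}"]
    unfolding L0_def link_def by auto
  have "\<tau> \<in> link L0 {x}" using insert.prems(2) link_x by simp
  hence \<tau>: "x \<notin> \<tau>" "insert x \<tau> \<in> L0" unfolding link_def by auto
  have "card (insert x F) \<le> n" using hd insert.prems(1) unfolding has_dim_def by blast
  hence "n - card F = Suc (n - card (insert x F))" using insert.hyps by simp
  hence "cycle_ext K L0 (insert x \<tau>) (Suc (n - card (insert x F)))"
    using insert.IH[OF F] \<tau>(2) unfolding L0_def by simp
  thus ?case using cycle_ext_vertex_link[OF sc_link[OF sc F, folded L0_def] xL0 \<tau>(1)] link_x by simp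
qed

text \<open>Doubly Buchsbaum complexes satisfy the link deletion hypothesis: deletions of links are
  links in vertex deletions.\<close>

lemma doubly_buchsbaum_link_deletions_acyclic:
  assumes db: "doubly_buchsbaum K \<Delta> n"
  shows "link_deletions_acyclic K \<Delta> n"
  unfolding link_deletions_acyclic_def
proof (intro ballI impI allI)
  fix \<sigma> w m assume s: "\<sigma> \<in> \<Delta>" "\<sigma> \<noteq> {}" and m: "m + card \<sigma> < n"
  have B: "hvanish K (link \<Delta> \<sigma>) m" using db s m unfolding doubly_buchsbaum_def buchsbaum_def by blast
  show "hvanish K (delete (link \<Delta> \<sigma>) {w}) m"
  proof (cases "w \<in> \<sigma> \<or> w \<notin> vertices \<Delta>")
    case True
    hence "delete (link \<Delta> \<sigma>) {w} = link \<Delta> \<sigma>" unfolding delete_def link_def vertices_def by auto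
    thus ?thesis using B by simp
  next
    case False
    hence w: "w \<notin> \<sigma>" "w \<in> vertices \<Delta>" by auto
    have "\<sigma> \<in> delete \<Delta> {w}" using s w unfolding delete_def by auto
    hence "hvanish K (link (delete \<Delta> {w}) \<sigma>) m"
      using db w(2) s(2) m unfolding doubly_buchsbaum_def buchsbaum_def by blast
    thus ?thesis using link_delete[OF w(1)] by simp
  qed
qed

text \<open>Buchsbaum* complexes satisfy the link deletion hypothesis: below the top degree of the
  link, the vertex link is acyclic; in its top degree, cycle extension is available.\<close>

lemma buchsbaum_star_link_deletions_acyclic:
  assumes bs: "buchsbaum_star K \<Delta> n"
  shows "link_deletions_acyclic K \<Delta> n"
  unfolding link_deletions_acyclic_def
proof (intro ballI impI allI)
  fix \<sigma> w m assume s: "\<sigma> \<in> \<Delta>" "\<sigma> \<noteq> {}" and m: "m + card \<sigma> < n"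
  have bb: "buchsbaum K \<Delta> n" and rs: "\<forall>\<tau>\<in>\<Delta>. rel_surj K \<Delta> (cost \<Delta> \<tau>) n"
    using bs unfolding buchsbaum_star_def by auto
  have sc: "simplicial_complex \<Delta>" and hd: "has_dim \<Delta> n" using bb unfolding buchsbaum_def by auto
  define L where "L = link \<Delta> \<sigma>"
  have scL: "simplicial_complex L" unfolding L_def by (rule sc_link[OF sc s(1)])
  have cmL: "cm_upto K L (n - card \<sigma>)" unfolding L_def by (rule buchsbaum_link_cm[OF bb s])
  show "hvanish K (delete (link \<Delta> \<sigma>) {w}) m" unfolding L_def[symmetric]
  proof (rule deletion_acyclic_if_link_cycles_extend[OF scL])
    show "hvanish K L m" using cm_upto_acyclic[OF scL cmL] m by simp
    assume wV: "w \<in> \<Union>L"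
    have wf: "{w} \<in> L" by (rule sc_vertex_face[OF scL wV])
    show "link_cycles_extend K L w m"
    proof (cases "Suc m < n - card \<sigma>")
      case True
      have "hvanish K (link L {w}) m"
        using cm_upto_acyclic[OF sc_link[OF scL wf] cm_upto_link[OF scL cmL wf]] True by simp
      thus ?thesis by (rule link_cycles_extend_if_link_acyclic[OF scL wV])
    next
      case False
      hence "n - card \<sigma> = Suc m" using m by simp
      moreover have "cycle_ext K L {w} (n - card \<sigma>)"
        using buchsbaum_star_link_cycle_ext[OF sc hd rs sc_finite_face[OF sc s(1)] s(1)] wf
        unfolding L_def by blast
      ultimately show ?thesis using link_cycles_extend_if_cycle_ext[OF scL wV] by simp
    qed
  qed
qed

theorem mainTheorem1:
  fixes \<Delta> :: "'a::linorder set set" and \<kappa> :: "'a \<Rightarrow> nat" and d :: nat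
    and K :: "'k::field itself"
  assumes "d \<ge> 2"
    and "simplicial_complex \<Delta>" and "has_dim \<Delta> d"
    and "balanced \<Delta> d \<kappa>"
  shows "(doubly_buchsbaum K \<Delta> d \<longrightarrow>
            (\<forall>S. S \<noteq> {} \<and> S \<subset> {1..d} \<longrightarrow> buchsbaum_star K (rank_selected \<Delta> \<kappa> S) (card S)))
       \<and> (buchsbaum_star K \<Delta> d \<longrightarrow>
            (\<forall>S. S \<noteq> {} \<and> S \<subset> {1..d} \<longrightarrow> buchsbaum_star K (rank_selected \<Delta> \<kappa> S) (card S)))"
proof -
  have col: "proper_col \<Delta> {1..d} \<kappa>" by (rule proper_col_of_balanced[OF assms(2,4)])
  have selected: "buchsbaum_star K (rank_selected \<Delta> \<kappa> S) (card S)"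
    if "buchsbaum K \<Delta> d" "link_deletions_acyclic K \<Delta> d" "S \<subset> {1..d}" for S
    using rank_selected_buchsbaum_star[of K \<Delta> "{1..d}" \<kappa> S] that col by simp
  have "buchsbaum K \<Delta> d \<and> link_deletions_acyclic K \<Delta> d" if "doubly_buchsbaum K \<Delta> d"
    using that doubly_buchsbaum_link_deletions_acyclic unfolding doubly_buchsbaum_def by blast
  moreover have "buchsbaum K \<Delta> d \<and> link_deletions_acyclic K \<Delta> d" if "buchsbaum_star K \<Delta> d"
    using that buchsbaum_star_link_deletions_acyclic unfolding buchsbaum_star_def by blast
  ultimately show ?thesis using selected by blast
qed

end
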